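(* Let $n\ge1$, $s\in\{1,\dots,n\}$ and let $C\in\mathbb{R}^{n\times n}$ be symmetric positive definite. Let $x^*$ be an optimal solution of the problem defining $\hat z(\lambda_{\min}(C))$, and let $\beta^*=(\beta^*_1\ge\dots\ge\beta^*_n)$ be the eigenvalues of $M_0(x^* )$ in nonincreasing order. Let $k\in\{0,\dots,s-1\}$ be the integer with $\beta^*_k>\frac{1}{s-k}\sum_{i=k+1}^n\beta^*_i\ge\beta^*_{k+1}$, where $\beta^*_0=\infty$. Then: (i) with the convention $(x^* )^\downarrow_0=0$, $$\hat z(0)-\hat z(\lambda_{\min}(C))\ge\Delta^{lb}:=\lambda_{\min}(C)\Big(k-\sum_{i=1}^k(x^* )^\downarrow_i\Big)\Big(\frac{s-k}{\sum_{i=k+1}^n\beta^*_i}-\frac{1}{\beta^*_k}\Big)\ge0;$$ (ii) if $k\ge1$ and $(x^* )^\downarrow_k<1$, then $\hat z(0)>\hat z(\lambda_{\min}(C))$.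
   Context: $\lambda_{\min}(C)$ is the smallest eigenvalue of $C$; $y^\downarrow_i$ denotes the $i$-th largest entry of a vector $y$, and $1/\infty=0$. For $0\le t\le\lambda_{\min}(C)$ let $A(t)\in\mathbb{R}^{n\times n}$ be a Cholesky factor of $C-tI$ (so $C-tI=A(t)^\top A(t)$), with $i$-th column $a_i(t)$, and for $x\in[0,1]^n$ let $M_t(x)=\sum_i x_i a_i(t)a_i(t)^\top$. For a positive semidefinite $X$ with eigenvalues $\lambda_1(X)\ge\dots\ge\lambda_n(X)$ and $t\ge0$, $\Phi_s(X;t)=\sum_{i=1}^s\log(\lambda_i(X)+t)$ (natural log); $\widehat{\Phi}_s(\cdot\,;t)$ is its concave envelope on the cone of $n\times n$ positive semidefinite matrices (pointwise infimum of all concave functions there that are $\ge\Phi_s(\cdot\,;t)$). $\hat z(t)=\max\{\widehat{\Phi}_s(M_t(x);t) : x\in[0,1]^n,\ \sum_i x_i=s\}$. *)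

theory Defs
  imports "Jordan_Normal_Form.Char_Poly" "HOL-Library.Extended_Real"
begin

(* For real symmetric matrices this exists. *)
definition eigs :: "real mat \<Rightarrow> real list" where
  "eigs X = (THE ys. length ys = dim_row X \<and> sorted (rev ys) \<and>
                     char_poly X = (\<Prod>y\<leftarrow>ys. [:- y, 1:]))"

definition eig :: "real mat \<Rightarrow> nat \<Rightarrow> real" where
  "eig X i = eigs X ! (i - 1)"

definition lambda_min :: "real mat \<Rightarrow> real" where
  "lambda_min X = eig X (dim_row X)"

definition sym_pd :: "nat \<Rightarrow> real mat \<Rightarrow> bool" where
  "sym_pd n C \<longleftrightarrow> C \<in> carrier_mat n n \<and> transpose_mat C = C \<and>
     (\<forall>v \<in> carrier_vec n. v \<noteq> 0\<^sub>v n \<longrightarrow> v \<bullet> (C *\<^sub>v v) > 0)"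

definition psd_cone :: "nat \<Rightarrow> real mat set" where
  "psd_cone n = {X \<in> carrier_mat n n. transpose_mat X = X \<and>
     (\<forall>v \<in> carrier_vec n. v \<bullet> (X *\<^sub>v v) \<ge> 0)}"

definition cholesky_factor :: "nat \<Rightarrow> real mat \<Rightarrow> real mat \<Rightarrow> bool" where
  "cholesky_factor n B A \<longleftrightarrow> A \<in> carrier_mat n n \<and> upper_triangular A \<and>
     (\<forall>i < n. A $$ (i, i) \<ge> 0) \<and> transpose_mat A * A = B"

(* M(x) = sum_i x_i a_i a_i^T, a_i = i-th column of A (indices 0..n-1) *)
definition Mx :: "nat \<Rightarrow> real mat \<Rightarrow> (nat \<Rightarrow> real) \<Rightarrow> real mat" where
  "Mx n A x = mat n n (\<lambda>(j, l). \<Sum>i<n. x i * (A $$ (j, i) * A $$ (l, i)))"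

(* natural log extended with log 0 = -infinity (only used for nonneg. arguments) *)
definition eln :: "real \<Rightarrow> ereal" where
  "eln y = (if y > 0 then ereal (ln y) else - \<infinity>)"

definition Phi :: "nat \<Rightarrow> real mat \<Rightarrow> real \<Rightarrow> ereal" where
  "Phi s X t = (\<Sum>i\<in>{1..s}. eln (eig X i + t))"

definition concave_on_psd :: "nat \<Rightarrow> (real mat \<Rightarrow> real) \<Rightarrow> bool" where
  "concave_on_psd n g \<longleftrightarrow> (\<forall>X\<in>psd_cone n. \<forall>Y\<in>psd_cone n. \<forall>\<theta>::real. 0 \<le> \<theta> \<and> \<theta> \<le> 1 \<longrightarrow>
     g (\<theta> \<cdot>\<^sub>m X + (1 - \<theta>) \<cdot>\<^sub>m Y) \<ge> \<theta> * g X + (1 - \<theta>) * g Y)"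

definition Phi_hat :: "nat \<Rightarrow> nat \<Rightarrow> real mat \<Rightarrow> real \<Rightarrow> ereal" where
  "Phi_hat n s X t = (INF g \<in> {g. concave_on_psd n g \<and>
       (\<forall>Y\<in>psd_cone n. Phi s Y t \<le> ereal (g Y))}. ereal (g X))"

definition feasible :: "nat \<Rightarrow> nat \<Rightarrow> (nat \<Rightarrow> real) \<Rightarrow> bool" where
  "feasible n s x \<longleftrightarrow> (\<forall>i<n. 0 \<le> x i \<and> x i \<le> 1) \<and> (\<Sum>i<n. x i) = real s"

(* zhat(t), computed with Cholesky factor A = A(t) *)
definition zhat :: "nat \<Rightarrow> nat \<Rightarrow> real mat \<Rightarrow> real \<Rightarrow> ereal" where
  "zhat n s A t = (SUP x \<in> {x. feasible n s x}. Phi_hat n s (Mx n A x) t)"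

definition optimal :: "nat \<Rightarrow> nat \<Rightarrow> real mat \<Rightarrow> real \<Rightarrow> (nat \<Rightarrow> real) \<Rightarrow> bool" where
  "optimal n s A t x \<longleftrightarrow> feasible n s x \<and>
     (\<forall>y. feasible n s y \<longrightarrow> Phi_hat n s (Mx n A y) t \<le> Phi_hat n s (Mx n A x) t)"

definition xdown :: "nat \<Rightarrow> (nat \<Rightarrow> real) \<Rightarrow> nat \<Rightarrow> real" where
  "xdown n x i = (if i = 0 then 0 else rev (sort (map x [0..<n])) ! (i - 1))"

end

(*
  Let x be the optimal solution. Write M_t(x) = B B^T with B = A(t) diag(sqrt x); then W_t = B^T B has
  the same spectrum, and W_lambda = W_0 - lambda diag(x) because A(lambda)^T A(lambda) = A(0)^T A(0) - lambda I.
  Let beta be the spectrum of M_0(x), k as in the statement, and a the mean of beta_(k+1), ..., beta_n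
  over s - k slots.

  Lower bound: beta is a convex combination of spectra (beta_1, ..., beta_k, a, ..., a, 0, ..., 0)
  (s - k copies of a), obtained by moving mass between coordinates of a hypersimplex. Phi_s(.;0) equals
  Gamma = sum_(i<=k) ln beta_i + (s - k) ln a at each of them, so every concave majorant of Phi_s is at
  least Gamma at M_0(x), and zhat(0) >= Gamma.

  Upper bound: tangent lines of ln at beta_i (i <= k) and at a, combined with Ky Fan's inequality, give
  an affine majorant of Phi_s(.;lambda). At M_lambda(x) it equals
  Gamma - lambda sum_(i<=k) (1/a - 1/beta_i) (1 - d_i), where d_i = v_i^T diag(x) v_i for the
  eigenvectors v_i of W_0. As 1/a - 1/beta_i decreases in i and sum_(i<=k) d_i is at most the sum of
  the k largest entries of x, this is at most Gamma - Delta^lb. Finally W_lambda is positive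
  semidefinite, so lambda d_i <= beta_i, which forces a >= lambda > 0.
*)
theory Submission
  imports Defs "HOL-Combinatorics.List_Permutation"
begin

section \<open>Matrix algebra over the reals\<close>

lemma index_mult_mat_sum:
  assumes "A \<in> carrier_mat n m" "B \<in> carrier_mat m p" "i < n" "j < p"
  shows "(A * B) $$ (i,j) = (\<Sum>l<m. A $$ (i,l) * B $$ (l,j))"
  using assms by (simp add: scalar_prod_def lessThan_atLeast0)

lemma index_mult_mat_vec_sum:
  assumes "A \<in> carrier_mat n m" "v \<in> carrier_vec m" "i < n"
  shows "(A *\<^sub>v v) $ i = (\<Sum>l<m. A $$ (i,l) * v $ l)"
  using assms by (simp add: scalar_prod_def lessThan_atLeast0)

lemma scalar_prod_sum: "v \<in> carrier_vec n \<Longrightarrow> w \<bullet> v = (\<Sum>l<n. w $ l * v $ l)"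
  by (simp add: scalar_prod_def lessThan_atLeast0)

lemma square_mult_carrier_mat [simp]:
  "A \<in> carrier_mat m m \<Longrightarrow> B \<in> carrier_mat m m \<Longrightarrow> A * B \<in> carrier_mat m m"
  by (rule mult_carrier_mat)

lemma square_transpose_carrier_mat:
  "A \<in> carrier_mat m m \<Longrightarrow> transpose_mat A \<in> carrier_mat m m"
  by simp

definition orthonormal :: "nat \<Rightarrow> real mat \<Rightarrow> bool" where
  "orthonormal n U \<longleftrightarrow> U \<in> carrier_mat n n \<and> transpose_mat U * U = 1\<^sub>m n"

lemma orthonormal_carrier: "orthonormal n U \<Longrightarrow> U \<in> carrier_mat n n"
  by (simp add: orthonormal_def)

lemma orthonormal_right_inverse:
  assumes "orthonormal n U" shows "U * transpose_mat U = 1\<^sub>m n"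
  using assms mat_mult_left_right_inverse[of "transpose_mat U" n U] unfolding orthonormal_def by auto

lemma orthonormal_transpose:
  assumes "orthonormal n U" shows "orthonormal n (transpose_mat U)"
  using orthonormal_right_inverse[OF assms] assms unfolding orthonormal_def by simp

lemma orthonormal_mult:
  assumes "orthonormal n A" "orthonormal n B" shows "orthonormal n (A * B)"
proof -
  have A: "A \<in> carrier_mat n n" and B: "B \<in> carrier_mat n n"
    using assms by (auto simp: orthonormal_def)
  have "transpose_mat (A * B) * (A * B) = transpose_mat B * (transpose_mat A * A) * B"
    using A B by (simp add: transpose_mult[OF A B] assoc_mult_mat[of _ n n _ n _ n])
  also have "\<dots> = 1\<^sub>m n" using assms B unfolding orthonormal_def by simp
  finally show ?thesis unfolding orthonormal_def using A B by simp
qed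

lemma orthonormal_columns:
  assumes "orthonormal n U" "i < n" "j < n"
  shows "(\<Sum>a<n. U $$ (a,i) * U $$ (a,j)) = (if i = j then 1 else 0)"
proof -
  have U: "U \<in> carrier_mat n n" using assms(1) by (rule orthonormal_carrier)
  have "(transpose_mat U * U) $$ (i,j) = (\<Sum>a<n. U $$ (a,i) * U $$ (a,j))"
    using assms U by (subst index_mult_mat_sum[OF square_transpose_carrier_mat[OF U] U]) auto
  then show ?thesis using assms unfolding orthonormal_def by simp
qed

lemma orthonormal_rows:
  assumes "orthonormal n U" "a < n" "b < n"
  shows "(\<Sum>l<n. U $$ (a,l) * U $$ (b,l)) = (if a = b then 1 else 0)"
proof -
  have U: "U \<in> carrier_mat n n" using assms(1) by (rule orthonormal_carrier)
  have "(U * transpose_mat U) $$ (a,b) = (\<Sum>l<n. U $$ (a,l) * U $$ (b,l))"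
    using assms U by (subst index_mult_mat_sum[OF U square_transpose_carrier_mat[OF U]]) auto
  then show ?thesis using assms orthonormal_right_inverse[OF assms(1)] by simp
qed

lemma index_mult_diag_transpose:
  fixes U :: "real mat"
  assumes U: "U \<in> carrier_mat n n" and i: "i < n" and j: "j < n"
  shows "(U * mat_diag n f * transpose_mat U) $$ (i,j) = (\<Sum>l<n. U $$ (i,l) * f l * U $$ (j,l))"
proof -
  have "U * mat_diag n f = mat n n (\<lambda>(i,j). U $$ (i,j) * f j)"
    by (rule mat_diag_mult_right[OF U])
  then show ?thesis
    using i j U by (simp add: index_mult_mat_sum[of _ n n _ n] del: index_mult_mat)
qed

lemma transpose_diag_conj:
  fixes U :: "real mat"
  assumes U: "U \<in> carrier_mat n n"
  shows "transpose_mat (U * mat_diag n f * transpose_mat U) = U * mat_diag n f * transpose_mat U"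
proof (rule eq_matI)
  fix i j assume "i < dim_row (U * mat_diag n f * transpose_mat U)" "j < dim_col (U * mat_diag n f * transpose_mat U)"
  then have i: "i < n" and j: "j < n" using U by auto
  have "transpose_mat (U * mat_diag n f * transpose_mat U) $$ (i,j) = (U * mat_diag n f * transpose_mat U) $$ (j,i)"
    using i j U by simp
  also have "\<dots> = (\<Sum>l<n. U $$ (i,l) * f l * U $$ (j,l))"
    unfolding index_mult_diag_transpose[OF U j i] by (simp add: ac_simps)
  finally show "transpose_mat (U * mat_diag n f * transpose_mat U) $$ (i,j) = (U * mat_diag n f * transpose_mat U) $$ (i,j)"
    unfolding index_mult_diag_transpose[OF U i j] .
qed (use U in auto)

section \<open>The spectral theorem for real symmetric matrices\<close>

lemma real_symmetric_form_real:
  fixes Y :: "real mat" and v :: "complex vec"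
  assumes Y: "Y \<in> carrier_mat n n" and sym: "transpose_mat Y = Y"
  shows "Im (\<Sum>i<n. \<Sum>j<n. cnj (v $ i) * complex_of_real (Y $$ (i,j)) * v $ j) = 0"
proof -
  define S where "S = (\<Sum>i<n. \<Sum>j<n. cnj (v $ i) * complex_of_real (Y $$ (i,j)) * v $ j)"
  have "cnj S = (\<Sum>i<n. \<Sum>j<n. v $ i * complex_of_real (Y $$ (i,j)) * cnj (v $ j))"
    unfolding S_def by (simp add: cnj_sum)
  also have "\<dots> = (\<Sum>j<n. \<Sum>i<n. v $ i * complex_of_real (Y $$ (i,j)) * cnj (v $ j))"
    by (rule sum.swap)
  also have "\<dots> = S" unfolding S_def
  proof (intro sum.cong refl)
    fix i j assume "i \<in> {..<n}" "j \<in> {..<n}"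
    then have "Y $$ (j,i) = Y $$ (i,j)" using sym Y
      by (metis carrier_matD(1) carrier_matD(2) index_transpose_mat(1) lessThan_iff)
    then show "v $ j * complex_of_real (Y $$ (j, i)) * cnj (v $ i)
        = cnj (v $ i) * complex_of_real (Y $$ (i, j)) * v $ j"
      by simp
  qed
  finally show ?thesis unfolding S_def[symmetric] by (metis cnj.simps(2) neg_equal_zero)
qed

lemma real_symmetric_eigenvalue:
  fixes Y :: "real mat"
  assumes Y: "Y \<in> carrier_mat n n" and sym: "transpose_mat Y = Y" and n: "n > 0"
  obtains r where "eigenvalue Y r"
proof -
  define Yc where "Yc = map_mat complex_of_real Y"
  have Yc: "Yc \<in> carrier_mat n n" using Y by (simp add: Yc_def)
  obtain as where as: "char_poly Yc = (\<Prod>a\<leftarrow>as. [:- a, 1:])" "length as = n"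
    using char_poly_factorized[OF Yc] by blast
  define a where "a = hd as"
  have "a \<in> set as" using as n unfolding a_def by (cases as) auto
  then have root: "poly (char_poly Yc) a = 0" unfolding as(1) by (simp add: poly_prod_list_zero_iff)
  then have "eigenvalue Yc a" using eigenvalue_root_char_poly[OF Yc] by simp
  then obtain v where "eigenvector Yc v a" unfolding eigenvalue_def by blast
  then have v: "v \<in> carrier_vec n" and v0: "v \<noteq> 0\<^sub>v n" and Yv: "Yc *\<^sub>v v = a \<cdot>\<^sub>v v"
    using Yc unfolding eigenvector_def by auto
  obtain i0 where i0: "i0 < n" "v $ i0 \<noteq> 0"
    using v v0 by (metis eq_vecI index_zero_vec(1) index_zero_vec(2) carrier_vecD)
  define N where "N = (\<Sum>i<n. (cmod (v $ i))^2)"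
  have "(cmod (v $ i0))^2 \<le> N" unfolding N_def by (rule member_le_sum) (use i0 in auto)
  moreover have "(cmod (v $ i0))^2 > 0" using i0 by simp
  ultimately have N: "N > 0" by linarith
  have "(\<Sum>i<n. \<Sum>j<n. cnj (v $ i) * complex_of_real (Y $$ (i,j)) * v $ j) = (\<Sum>i<n. cnj (v $ i) * (Yc *\<^sub>v v) $ i)"
  proof (rule sum.cong[OF refl])
    fix i assume i: "i \<in> {..<n}"
    have "(Yc *\<^sub>v v) $ i = (\<Sum>j<n. complex_of_real (Y $$ (i,j)) * v $ j)"
      using index_mult_mat_vec_sum[OF Yc v] i Y unfolding Yc_def by simp
    then show "(\<Sum>j<n. cnj (v $ i) * complex_of_real (Y $$ (i, j)) * v $ j) = cnj (v $ i) * (Yc *\<^sub>v v) $ i"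
      by (simp add: sum_distrib_left mult.assoc)
  qed
  also have "\<dots> = a * (\<Sum>i<n. cnj (v $ i) * v $ i)" unfolding Yv using v
    by (auto simp: sum_distrib_left intro!: sum.cong)
  also have "(\<Sum>i<n. cnj (v $ i) * v $ i) = of_real N"
    unfolding N_def of_real_sum by (rule sum.cong[OF refl]) (metis complex_norm_square mult.commute)
  finally have "Im (a * of_real N) = 0" using real_symmetric_form_real[OF Y sym, of v] by simp
  then have "a = of_real (Re a)" using N by (simp add: complex_eq_iff)
  moreover have "poly (char_poly Yc) (of_real (Re a)) = of_real (poly (char_poly Y) (Re a))"
    unfolding Yc_def of_real_hom.char_poly_hom[OF Y] by simp
  ultimately have "poly (char_poly Y) (Re a) = 0" using root by simp
  then show ?thesis using eigenvalue_root_char_poly[OF Y] that by blast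
qed

lemma real_symmetric_unit_eigenvector:
  fixes Y :: "real mat"
  assumes Y: "Y \<in> carrier_mat n n" and sym: "transpose_mat Y = Y" and n: "n > 0"
  obtains r f where "(\<Sum>i<n. (f i)^2) = 1" "\<And>i. i < n \<Longrightarrow> (\<Sum>j<n. Y $$ (i,j) * f j) = r * f i"
proof -
  obtain r where "eigenvalue Y r" using real_symmetric_eigenvalue[OF assms] by blast
  then obtain v where "eigenvector Y v r" unfolding eigenvalue_def by blast
  then have v: "v \<in> carrier_vec n" and v0: "v \<noteq> 0\<^sub>v n" and Yv: "Y *\<^sub>v v = r \<cdot>\<^sub>v v"
    using Y unfolding eigenvector_def by auto
  obtain i0 where i0: "i0 < n" "v $ i0 \<noteq> 0"
    using v v0 by (metis eq_vecI index_zero_vec(1) index_zero_vec(2) carrier_vecD)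
  define N where "N = (\<Sum>i<n. (v $ i)^2)"
  have "(v $ i0)^2 \<le> N" unfolding N_def by (rule member_le_sum) (use i0 in auto)
  moreover have "(v $ i0)^2 > 0" using i0 by simp
  ultimately have N: "N > 0" by linarith
  define f where "f i = v $ i / sqrt N" for i
  show ?thesis
  proof
    show "(\<Sum>i<n. (f i)^2) = 1"
      unfolding f_def using N by (simp add: power_divide sum_divide_distrib[symmetric] N_def)
    fix i assume i: "i < n"
    have "(\<Sum>j<n. Y $$ (i,j) * v $ j) = r * v $ i"
      using index_mult_mat_vec_sum[OF Y v i] Yv i v by simp
    then show "(\<Sum>j<n. Y $$ (i,j) * f j) = r * f i"
      unfolding f_def by (simp add: sum_divide_distrib[symmetric] mult.assoc times_divide_eq_right)
  qed
qed

lemma sum_power2_eq_zeroD: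
  fixes w :: "nat \<Rightarrow> real"
  assumes "(\<Sum>l<m. (w l)^2) = 0" "i < m"
  shows "w i = 0"
  using sum_nonneg_eq_0_iff[of "{..<m}" "\<lambda>l. (w l)^2"] assms by simp

text \<open>The Householder reflection \<open>I - 2 w w\<^sup>T / |w|\<^sup>2\<close> (the identity for \<open>w = 0\<close>).\<close>

definition householder :: "nat \<Rightarrow> (nat \<Rightarrow> real) \<Rightarrow> real mat" where
  "householder m w = mat m m (\<lambda>(i,j). (if i = j then 1 else 0) - 2 / (\<Sum>l<m. (w l)^2) * w i * w j)"

lemma householder_carrier [simp]: "householder m w \<in> carrier_mat m m"
  by (simp add: householder_def)

lemma householder_symmetric: "transpose_mat (householder m w) = householder m w"
  by (rule eq_matI) (auto simp: householder_def)

lemma householder_involution: "householder m w * householder m w = 1\<^sub>m m"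
proof (rule eq_matI)
  fix i j assume "i < dim_row (1\<^sub>m m)" "j < dim_col (1\<^sub>m m)"
  then have i: "i < m" and j: "j < m" by auto
  define q where "q = (\<Sum>l<m. (w l)^2)"
  define c where "c = 2 / q"
  have "(householder m w * householder m w) $$ (i,j) = (\<Sum>l<m. ((if i = l then 1 else 0) - c * w i * w l) *
      ((if l = j then 1 else 0) - c * w l * w j))"
    using i j by (subst index_mult_mat_sum[OF householder_carrier householder_carrier i j])
      (simp add: householder_def c_def q_def)
  also have "\<dots> = (\<Sum>l<m. (if i = l then 1 else 0) * (if l = j then 1 else 0))
      - (\<Sum>l<m. (if i = l then 1 else 0) * (c * w l * w j))
      - (\<Sum>l<m. (c * w i * w l) * (if l = j then 1 else 0))
      + (\<Sum>l<m. (c * w i * w l) * (c * w l * w j))"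
    by (simp add: algebra_simps sum.distrib sum_subtractf)
  also have "\<dots> = (if i = j then 1 else 0) - c * w i * w j - c * w i * w j + c * c * w i * w j * q"
  proof -
    have "(\<Sum>l<m. (if i = l then 1 else 0) * (if l = j then 1 else (0::real))) = (if i = j then 1 else 0)"
      "(\<Sum>l<m. (if i = l then 1 else 0) * (c * w l * w j)) = c * w i * w j"
      using i by (simp_all add: sum.delta of_bool_def[symmetric])
    moreover have "(\<Sum>l<m. (c * w i * w l) * (if l = j then 1 else 0)) = c * w i * w j"
      using j by (simp add: sum.delta' of_bool_def[symmetric])
    moreover have "(\<Sum>l<m. (c * w i * w l) * (c * w l * w j)) = c * c * w i * w j * q"
      unfolding q_def sum_distrib_left by (rule sum.cong) (auto simp: power2_eq_square)
    ultimately show ?thesis by simp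
  qed
  also have "\<dots> = (if i = j then 1 else 0)"
  proof (cases "q = 0")
    case True
    then have "w i = 0" using sum_power2_eq_zeroD[of w m i] i unfolding q_def by simp
    then show ?thesis by simp
  next
    case False
    then have "c * c * q = 2 * c" unfolding c_def by (simp add: field_simps power2_eq_square)
    then have "c * c * w i * w j * q = 2 * c * w i * w j" by (metis mult.commute mult.left_commute)
    then show ?thesis by simp
  qed
  finally show "(householder m w * householder m w) $$ (i,j) = 1\<^sub>m m $$ (i,j)" using i j by simp
qed (auto simp: householder_def)

lemma householder_orthonormal: "orthonormal m (householder m w)"
  unfolding orthonormal_def householder_symmetric by (simp add: householder_involution)

lemma householder_first_column:
  fixes f :: "nat \<Rightarrow> real"
  assumes f1: "(\<Sum>i<m. (f i)^2) = 1" and a: "a < m"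
  defines "w \<equiv> \<lambda>i. f i - (if i = 0 then 1 else 0)"
  shows "householder m w $$ (a, 0) = f a"
proof -
  have m: "0 < m" using a by simp
  define q where "q = (\<Sum>l<m. (w l)^2)"
  have wl: "(w l)^2 = (f l)^2 - 2 * (if l = 0 then f l else 0) + (if l = 0 then 1 else 0)" for l
    by (simp add: w_def power2_eq_square algebra_simps)
  have "q = (\<Sum>l<m. (f l)^2) - 2 * (\<Sum>l<m. (if l = 0 then f l else 0)) + (\<Sum>l<m. (if l = 0 then 1 else 0))"
    unfolding q_def wl by (simp only: sum.distrib sum_subtractf sum_distrib_left)
  then have q: "q = - 2 * w 0" using f1 m by (simp add: sum.delta' w_def)
  show ?thesis
  proof (cases "q = 0")
    case True
    then have "w a = 0" "w 0 = 0" using sum_power2_eq_zeroD[of w m a] a q unfolding q_def by simp_all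
    then show ?thesis using a unfolding householder_def q_def[symmetric] by (auto simp: w_def split: if_splits)
  next
    case False
    then have "2 / q * w 0 = -1" using q by (simp add: field_simps)
    then have "2 / q * w a * w 0 = - w a" by (metis mult.commute mult_minus1 mult.left_commute)
    then show ?thesis using a m unfolding householder_def q_def[symmetric] by (simp add: w_def)
  qed
qed

definition border_mat :: "real \<Rightarrow> nat \<Rightarrow> real mat \<Rightarrow> real mat" where
  "border_mat c n M = mat (Suc n) (Suc n)
     (\<lambda>(i,j). if i = 0 \<and> j = 0 then c else if i = 0 \<or> j = 0 then 0 else M $$ (i - 1, j - 1))"

lemma border_mat_carrier [simp]: "border_mat c n M \<in> carrier_mat (Suc n) (Suc n)"
  by (simp add: border_mat_def)

lemma border_mat_mult:
  assumes A: "A \<in> carrier_mat n n" and B: "B \<in> carrier_mat n n"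
  shows "border_mat a n A * border_mat b n B = border_mat (a * b) n (A * B)"
proof (rule eq_matI)
  fix i j assume "i < dim_row (border_mat (a * b) n (A * B))" "j < dim_col (border_mat (a * b) n (A * B))"
  then have i: "i < Suc n" and j: "j < Suc n" by (auto simp: border_mat_def)
  have "(border_mat a n A * border_mat b n B) $$ (i,j)
      = border_mat a n A $$ (i,0) * border_mat b n B $$ (0,j)
        + (\<Sum>l<n. border_mat a n A $$ (i,Suc l) * border_mat b n B $$ (Suc l,j))"
    unfolding index_mult_mat_sum[OF border_mat_carrier border_mat_carrier i j] by (rule sum.lessThan_Suc_shift)
  also have "\<dots> = border_mat (a * b) n (A * B) $$ (i,j)"
  proof (cases "i = 0 \<or> j = 0")
    case True
    then show ?thesis using i j by (auto simp: border_mat_def)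
  next
    case False
    then have "i - 1 < n" "j - 1 < n" using i j by auto
    then show ?thesis
      using False i j A B by (simp add: border_mat_def index_mult_mat_sum[OF A B] del: index_mult_mat)
  qed
  finally show "(border_mat a n A * border_mat b n B) $$ (i,j) = border_mat (a * b) n (A * B) $$ (i,j)" .
qed (auto simp: border_mat_def)

lemma border_mat_transpose:
  "A \<in> carrier_mat n n \<Longrightarrow> transpose_mat (border_mat c n A) = border_mat c n (transpose_mat A)"
  by (rule eq_matI) (auto simp: border_mat_def)

lemma border_mat_diag:
  "border_mat c n (mat_diag n f) = mat_diag (Suc n) (\<lambda>i. if i = 0 then c else f (i - 1))"
  by (rule eq_matI) (auto simp: border_mat_def mat_diag_def)

lemma orthonormal_border_mat:
  assumes U: "orthonormal n U" shows "orthonormal (Suc n) (border_mat 1 n U)"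
proof -
  have Uc: "U \<in> carrier_mat n n" using U by (rule orthonormal_carrier)
  have "border_mat 1 n (1\<^sub>m n) = 1\<^sub>m (Suc n)" by (rule eq_matI) (auto simp: border_mat_def)
  then show ?thesis
    using U border_mat_mult[OF square_transpose_carrier_mat[OF Uc] Uc, of 1 1]
    unfolding orthonormal_def by (simp add: border_mat_transpose[OF Uc])
qed

lemma border_mat_of_first_column:
  assumes Z: "Z \<in> carrier_mat (Suc n) (Suc n)" "transpose_mat Z = Z"
    and col: "\<And>i. i < Suc n \<Longrightarrow> Z $$ (i,0) = (if i = 0 then r else 0)"
  defines "Z' \<equiv> mat n n (\<lambda>(i,j). Z $$ (Suc i, Suc j))"
  shows "Z = border_mat r n Z'" and "transpose_mat Z' = Z'"
proof -
  have sym: "Z $$ (j,i) = Z $$ (i,j)" if "i < Suc n" "j < Suc n" for i j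
    using Z that by (metis carrier_matD index_transpose_mat(1))
  show "Z = border_mat r n Z'"
  proof (rule eq_matI)
    fix i j assume "i < dim_row (border_mat r n Z')" "j < dim_col (border_mat r n Z')"
    then have i: "i < Suc n" and j: "j < Suc n" by (auto simp: border_mat_def)
    show "Z $$ (i,j) = border_mat r n Z' $$ (i,j)"
    proof (cases "i = 0 \<or> j = 0")
      case True
      then show ?thesis using col i j sym[OF i, of 0] sym[OF j, of 0] by (auto simp: border_mat_def)
    next
      case False
      then obtain i' j' where "i = Suc i'" "j = Suc j'" by (metis not0_implies_Suc)
      then show ?thesis using i j by (simp add: border_mat_def Z'_def)
    qed
  qed (use Z in \<open>auto simp: border_mat_def\<close>)
  show "transpose_mat Z' = Z'"
    by (rule eq_matI) (auto simp: Z'_def sym)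
qed

text \<open>A Householder reflection moving a unit eigenvector to the first unit vector splits off its
  eigenvalue.\<close>

lemma householder_deflation:
  fixes Y :: "real mat"
  assumes Y: "Y \<in> carrier_mat (Suc n) (Suc n)" and sym: "transpose_mat Y = Y"
  obtains H r Y' where "orthonormal (Suc n) H" "Y' \<in> carrier_mat n n" "transpose_mat Y' = Y'"
    "Y = H * border_mat r n Y' * transpose_mat H"
proof -
  obtain r f where f1: "(\<Sum>i<Suc n. (f i)^2) = 1"
    and ev: "\<And>i. i < Suc n \<Longrightarrow> (\<Sum>j<Suc n. Y $$ (i,j) * f j) = r * f i"
    using real_symmetric_unit_eigenvector[OF Y sym] by blast
  define H where "H = householder (Suc n) (\<lambda>i. f i - (if i = 0 then 1 else 0))"
  have H: "H \<in> carrier_mat (Suc n) (Suc n)" and Hs: "transpose_mat H = H" and HH: "H * H = 1\<^sub>m (Suc n)"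
    unfolding H_def by (simp_all add: householder_symmetric householder_involution)
  have H0: "H $$ (a, 0) = f a" if "a < Suc n" for a
    unfolding H_def by (rule householder_first_column[OF f1 that])
  define Z where "Z = H * (Y * H)"
  have YH: "Y * H \<in> carrier_mat (Suc n) (Suc n)" using Y H by simp
  have Z: "Z \<in> carrier_mat (Suc n) (Suc n)" "transpose_mat Z = Z"
    unfolding Z_def using H YH transpose_mult[OF H YH] transpose_mult[OF Y H] Hs sym assoc_mult_mat[OF H Y H]
    by simp_all
  have YH0: "(Y * H) $$ (b, 0) = r * H $$ (b, 0)" if b: "b < Suc n" for b
  proof -
    have "(Y * H) $$ (b, 0) = (\<Sum>a<Suc n. Y $$ (b,a) * H $$ (a,0))"
      by (rule index_mult_mat_sum[OF Y H b]) simp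
    also have "\<dots> = (\<Sum>a<Suc n. Y $$ (b,a) * f a)"
      by (intro sum.cong refl) (simp add: H0 del: sum.lessThan_Suc)
    finally show ?thesis unfolding ev[OF b] H0[OF b] .
  qed
  have "Z $$ (i, 0) = (if i = 0 then r else 0)" if i: "i < Suc n" for i
  proof -
    have "Z $$ (i, 0) = (\<Sum>b<Suc n. H $$ (i,b) * (Y * H) $$ (b,0))"
      unfolding Z_def by (rule index_mult_mat_sum[OF H YH i]) simp
    also have "\<dots> = r * (\<Sum>b<Suc n. H $$ (i,b) * H $$ (b,0))"
      unfolding sum_distrib_left by (intro sum.cong refl) (simp add: YH0)
    also have "\<dots> = r * (H * H) $$ (i, 0)"
      using index_mult_mat_sum[OF H H i, of 0] by simp
    finally show ?thesis using HH i by simp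
  qed
  note Z' = border_mat_of_first_column[OF Z this]
  have "H * Z * transpose_mat H = (H * H) * Y * (H * H)"
    unfolding Z_def Hs using H Y by (simp add: assoc_mult_mat[of _ "Suc n" "Suc n" _ "Suc n" _ "Suc n"])
  then have "Y = H * Z * transpose_mat H" using HH Y by simp
  also have "\<dots> = H * border_mat r n (mat n n (\<lambda>(i,j). Z $$ (Suc i, Suc j))) * transpose_mat H"
    by (rule arg_cong[where f = "\<lambda>M. H * M * transpose_mat H", OF Z'(1)])
  finally show ?thesis
    using that[OF householder_orthonormal _ Z'(2)] unfolding H_def by simp
qed

lemma real_symmetric_diagonalizable:
  fixes Y :: "real mat"
  assumes "Y \<in> carrier_mat n n" "transpose_mat Y = Y"
  shows "\<exists>U \<mu>. orthonormal n U \<and> Y = U * mat_diag n \<mu> * transpose_mat U"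
  using assms
proof (induction n arbitrary: Y)
  case 0
  then have "Y = 1\<^sub>m 0 * mat_diag 0 (\<lambda>_. 0) * transpose_mat (1\<^sub>m 0)" by (intro eq_matI) auto
  moreover have "orthonormal 0 (1\<^sub>m 0)" unfolding orthonormal_def by auto
  ultimately show ?case by blast
next
  case (Suc n)
  obtain H r Y' where H: "orthonormal (Suc n) H" and Y': "Y' \<in> carrier_mat n n" "transpose_mat Y' = Y'"
    and Y: "Y = H * border_mat r n Y' * transpose_mat H"
    using householder_deflation[OF Suc.prems] by blast
  obtain U' \<mu>' where U': "orthonormal n U'" and Y'_eq: "Y' = U' * mat_diag n \<mu>' * transpose_mat U'"
    using Suc.IH[OF Y'] by blast
  have Hc: "H \<in> carrier_mat (Suc n) (Suc n)" and U'c: "U' \<in> carrier_mat n n"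
    using H U' by (simp_all add: orthonormal_carrier)
  define U where "U = H * border_mat 1 n U'"
  define \<mu> where "\<mu> i = (if i = 0 then r else \<mu>' (i - 1))" for i
  have "border_mat r n Y' = border_mat 1 n U' * mat_diag (Suc n) \<mu> * transpose_mat (border_mat 1 n U')"
    unfolding Y'_eq \<mu>_def border_mat_diag[symmetric] border_mat_transpose[OF U'c]
    using U'c by (simp add: border_mat_mult)
  moreover have "transpose_mat U = transpose_mat (border_mat 1 n U') * transpose_mat H"
    unfolding U_def by (rule transpose_mult[OF Hc border_mat_carrier])
  ultimately have "Y = U * mat_diag (Suc n) \<mu> * transpose_mat U"
    unfolding Y U_def using Hc by (simp add: assoc_mult_mat[of _ "Suc n" "Suc n" _ "Suc n" _ "Suc n"])
  moreover have "orthonormal (Suc n) U"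
    unfolding U_def by (rule orthonormal_mult[OF H orthonormal_border_mat[OF U']])
  ultimately show ?case by blast
qed

lemma prod_list_mset_eq:
  fixes f :: "'a \<Rightarrow> 'b::comm_monoid_mult"
  assumes "mset xs = mset ys" shows "(\<Prod>x\<leftarrow>xs. f x) = (\<Prod>x\<leftarrow>ys. f x)"
proof -
  have "(\<Prod>x\<leftarrow>xs. f x) = prod_mset (mset (map f xs))" by (rule prod_mset_prod_list[symmetric])
  also have "mset (map f xs) = mset (map f ys)" using assms by simp
  also have "prod_mset (mset (map f ys)) = (\<Prod>x\<leftarrow>ys. f x)" by (rule prod_mset_prod_list)
  finally show ?thesis .
qed

lemma linear_factors_mset_eq:
  fixes ys zs :: "'a::idom list"
  assumes "(\<Prod>y\<leftarrow>ys. [:-y,1:]) = (\<Prod>z\<leftarrow>zs. [:-z,1:])"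
  shows "mset ys = mset zs"
  using assms
proof (induction ys arbitrary: zs)
  case Nil
  show ?case
  proof (cases zs)
    case (Cons z zs')
    have "poly (\<Prod>z\<leftarrow>zs. [:-z,1:]) z = 0" unfolding Cons by (simp only: list.map prod_list.Cons poly_mult) simp
    moreover have "poly (\<Prod>z\<leftarrow>zs. [:-z,1:]) z = 1" unfolding Nil[symmetric] by simp
    ultimately show ?thesis by simp
  qed simp
next
  case (Cons y ys)
  have e1: "(\<Prod>z\<leftarrow>zs. [:-z,1:]) = [:-y,1:] * (\<Prod>z\<leftarrow>ys. [:-z,1:])"
    using Cons.prems by (simp only: list.map prod_list.Cons)
  have "poly (\<Prod>z\<leftarrow>zs. [:-z,1:]) y = 0" unfolding e1 by (simp only: poly_mult) simp
  then have yz: "y \<in> set zs" by (simp add: poly_prod_list_zero_iff)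
  then have m: "mset zs = mset (y # remove1 y zs)" by simp
  have e2: "(\<Prod>z\<leftarrow>zs. [:-z,1:]) = [:-y,1:] * (\<Prod>z\<leftarrow>remove1 y zs. [:-z,1:])"
    using prod_list_mset_eq[OF m, of "\<lambda>z. [:-z,1:]"] by (simp only: list.map prod_list.Cons)
  have "[:-y,1:] * (\<Prod>z\<leftarrow>ys. [:-z,1:]) = [:-y,1:] * (\<Prod>z\<leftarrow>remove1 y zs. [:-z,1:])"
    using e1 e2 by (rule trans[OF sym])
  moreover have "[:-y,1:] \<noteq> 0" by simp
  ultimately have "(\<Prod>z\<leftarrow>ys. [:-z,1:]) = (\<Prod>z\<leftarrow>remove1 y zs. [:-z,1:])"
    by (rule mult_left_cancel[THEN iffD1, rotated])
  then have "mset ys = mset (remove1 y zs)" by (rule Cons.IH)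
  then have "mset (y # ys) = mset (y # remove1 y zs)" by (simp only: mset.simps)
  from this m show ?case by (rule trans[OF _ sym])
qed

lemma char_poly_diag_conj:
  assumes U: "orthonormal n U"
  shows "char_poly (U * mat_diag n f * transpose_mat U) = (\<Prod>a\<leftarrow>map f [0..<n]. [:-a,1:])"
proof -
  have Uc: "U \<in> carrier_mat n n" using U orthonormal_def by auto
  have "similar_mat_wit (U * mat_diag n f * transpose_mat U) (mat_diag n f) U (transpose_mat U)"
    by (rule similar_mat_witI[of _ _ n]) (use U orthonormal_right_inverse[OF U] Uc in \<open>auto simp: orthonormal_def\<close>)
  then have "similar_mat (U * mat_diag n f * transpose_mat U) (mat_diag n f)" unfolding similar_mat_def by blast
  then have "char_poly (U * mat_diag n f * transpose_mat U) = char_poly (mat_diag n f)" by (rule char_poly_similar)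
  also have "\<dots> = (\<Prod>a\<leftarrow>diag_mat (mat_diag n f). [:-a,1:])"
    by (rule char_poly_upper_triangular[of _ n]) (auto simp: upper_triangular_def mat_diag_def)
  also have "diag_mat (mat_diag n f) = map f [0..<n]" by (simp add: diag_mat_def mat_diag_def)
  finally show ?thesis .
qed

lemma eigs_diag_conj:
  assumes U: "orthonormal n U" and L: "sorted (rev L)" "mset L = mset (map f [0..<n])"
  shows "eigs (U * mat_diag n f * transpose_mat U) = L"
proof -
  have Uc: "U \<in> carrier_mat n n" using U orthonormal_def by auto
  let ?Y = "U * mat_diag n f * transpose_mat U"
  have dim: "dim_row ?Y = n" using Uc by simp
  have cp: "char_poly ?Y = (\<Prod>a\<leftarrow>L. [:-a,1:])"
    unfolding char_poly_diag_conj[OF U] using prod_list_mset_eq[OF L(2)[symmetric]] by simp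
  have len: "length L = n" using L(2) by (metis length_map length_upt minus_nat.diff_0 size_mset)
  show ?thesis unfolding eigs_def
  proof (rule the_equality)
    show "length L = dim_row ?Y \<and> sorted (rev L) \<and> char_poly ?Y = (\<Prod>y\<leftarrow>L. [:- y, 1:])"
      using len dim L cp by simp
  next
    fix ys assume ys: "length ys = dim_row ?Y \<and> sorted (rev ys) \<and> char_poly ?Y = (\<Prod>y\<leftarrow>ys. [:- y, 1:])"
    then have "(\<Prod>y\<leftarrow>ys. [:- y, 1:]) = (\<Prod>y\<leftarrow>L. [:- y, 1:])" using cp by simp
    then have "mset ys = mset L" by (rule linear_factors_mset_eq)
    then have "mset (rev L) = mset (rev ys)" by simp
    then have "sort (rev ys) = rev L" using L(1) by (rule properties_for_sort)
    moreover have "sort (rev ys) = rev ys" using ys by (simp add: sorted_sort_id)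
    ultimately have "rev ys = rev L" by simp
    then show "ys = L" by simp
  qed
qed

lemma diag_conj_permute:
  assumes U: "orthonormal n U" and p: "p permutes {..<n}"
  defines "U' \<equiv> mat n n (\<lambda>(i,j). U $$ (i, p j))"
  shows "orthonormal n U'" and "U' * mat_diag n (\<mu> \<circ> p) * transpose_mat U' = U * mat_diag n \<mu> * transpose_mat U"
proof -
  have Uc: "U \<in> carrier_mat n n" and U'c: "U' \<in> carrier_mat n n"
    using U by (simp_all add: orthonormal_carrier U'_def)
  have pin: "p i < n" if "i < n" for i using permutes_in_image[OF p] that by simp
  have inj: "p i = p j \<longleftrightarrow> i = j" for i j using permutes_inj[OF p] by (auto dest: injD)
  show "orthonormal n U'"
    unfolding orthonormal_def
  proof (intro conjI U'c eq_matI)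
    fix i j assume "i < dim_row (1\<^sub>m n)" "j < dim_col (1\<^sub>m n)"
    then have i: "i < n" and j: "j < n" by auto
    have "(transpose_mat U' * U') $$ (i,j) = (\<Sum>l<n. U $$ (l, p i) * U $$ (l, p j))"
      using i j U'c by (subst index_mult_mat_sum[OF square_transpose_carrier_mat[OF U'c] U'c i j]) (simp add: U'_def)
    also have "\<dots> = (if i = j then 1 else 0)" using orthonormal_columns[OF U pin[OF i] pin[OF j]] inj by simp
    finally show "(transpose_mat U' * U') $$ (i,j) = 1\<^sub>m n $$ (i,j)" using i j by simp
  qed (auto simp: U'_def)
  show "U' * mat_diag n (\<mu> \<circ> p) * transpose_mat U' = U * mat_diag n \<mu> * transpose_mat U"
  proof (rule eq_matI)
    fix i j assume "i < dim_row (U * mat_diag n \<mu> * transpose_mat U)" "j < dim_col (U * mat_diag n \<mu> * transpose_mat U)"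
    then have i: "i < n" and j: "j < n" using Uc by auto
    have "(U' * mat_diag n (\<mu> \<circ> p) * transpose_mat U') $$ (i,j) = (\<Sum>l<n. U $$ (i,p l) * \<mu> (p l) * U $$ (j,p l))"
      using index_mult_diag_transpose[OF U'c i j] i j by (simp add: U'_def)
    also have "\<dots> = (\<Sum>l<n. U $$ (i,l) * \<mu> l * U $$ (j,l))"
      using sum.permute[OF p, of "\<lambda>l. U $$ (i,l) * \<mu> l * U $$ (j,l)"] by (simp add: comp_def)
    finally show "(U' * mat_diag n (\<mu> \<circ> p) * transpose_mat U') $$ (i,j) = (U * mat_diag n \<mu> * transpose_mat U) $$ (i,j)"
      using index_mult_diag_transpose[OF Uc i j] by simp
  qed (use Uc U'c in auto)
qed

lemma spectral_decomposition:
  fixes Y :: "real mat"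
  assumes Y: "Y \<in> carrier_mat n n" and sym: "transpose_mat Y = Y"
  shows "\<exists>U. orthonormal n U \<and> Y = U * mat_diag n (\<lambda>i. eigs Y ! i) * transpose_mat U
    \<and> sorted (rev (eigs Y)) \<and> length (eigs Y) = n"
proof -
  obtain U \<mu> where U: "orthonormal n U" and dec: "Y = U * mat_diag n \<mu> * transpose_mat U"
    using real_symmetric_diagonalizable[OF Y sym] by blast
  define L where "L = rev (sort (map \<mu> [0..<n]))"
  have "mset L = mset (map \<mu> [0..<n])" unfolding L_def by simp
  then obtain p where p: "p permutes {..<length (map \<mu> [0..<n])}" and pL: "permute_list p (map \<mu> [0..<n]) = L"
    using mset_eq_permutation by metis
  have p': "p permutes {..<n}" using p by simp
  have L: "map (\<mu> \<circ> p) [0..<n] = L"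
    using pL permute_list_nth[OF p] permutes_in_image[OF p'] unfolding L_def
    by (intro nth_equalityI) (auto simp: L_def[symmetric])
  define U' where "U' = mat n n (\<lambda>(i,j). U $$ (i, p j))"
  have U': "orthonormal n U'" and Y_eq: "Y = U' * mat_diag n (\<mu> \<circ> p) * transpose_mat U'"
    using diag_conj_permute[OF U p'] dec unfolding U'_def by auto
  have "eigs Y = L"
    unfolding Y_eq by (rule eigs_diag_conj[OF U']) (simp_all add: L L_def)
  then have eigs: "eigs Y = map (\<mu> \<circ> p) [0..<n]" using L by simp
  have "mat_diag n (\<mu> \<circ> p) = mat_diag n (\<lambda>i. eigs Y ! i)"
    unfolding eigs mat_diag_def by (intro eq_matI) auto
  moreover have "sorted (rev (eigs Y))" "length (eigs Y) = n"
    using \<open>eigs Y = L\<close> by (simp_all add: L_def)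
  ultimately show ?thesis using U' Y_eq by metis
qed

lemma det_sub_mult_commute:
  fixes A B :: "real mat"
  assumes A: "A \<in> carrier_mat n n" and B: "B \<in> carrier_mat n n"
  shows "det (x \<cdot>\<^sub>m 1\<^sub>m n - A * B) = det (x \<cdot>\<^sub>m 1\<^sub>m n - B * A)"
proof -
  let ?X = "x \<cdot>\<^sub>m 1\<^sub>m n" and ?I = "1\<^sub>m n :: real mat" and ?O = "0\<^sub>m n n :: real mat"
  define M1 where "M1 = four_block_mat ?X A B ?I"
  define M2 where "M2 = four_block_mat ?I B A ?X"
  define P where "P = four_block_mat ?O ?I ?I ?O"
  have d1: "det M1 = det (?X * ?I - A * B)"
    unfolding M1_def by (rule det_four_block_mat) (use A B in auto)
  have d2: "det M2 = det (?I * ?X - B * A)"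
    unfolding M2_def by (rule det_four_block_mat) (use A B in auto)
  have PM1: "P * M1 = four_block_mat B ?I ?X A"
    unfolding P_def M1_def using A B by (subst mult_four_block_mat[of _ n n _ n _ n]) auto
  have PM1P: "P * M1 * P = M2"
    unfolding PM1 unfolding P_def M2_def using A B by (subst mult_four_block_mat[of _ n n _ n _ n]) auto
  have PP: "P * P = 1\<^sub>m (n + n)"
    unfolding P_def by (subst mult_four_block_mat[of _ n n _ n _ n]) (auto intro!: eq_matI)
  have Pc: "P \<in> carrier_mat (n+n) (n+n)" unfolding P_def by auto
  have M1c: "M1 \<in> carrier_mat (n+n) (n+n)" unfolding M1_def using A B by auto
  have "det M2 = det P * det M1 * det P"
    unfolding PM1P[symmetric] using Pc M1c by (simp add: det_mult[of _ "n+n"])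
  also have "\<dots> = det (P * P) * det M1" using Pc by (simp add: det_mult[of _ "n+n"])
  also have "\<dots> = det M1" unfolding PP by simp
  finally have "det M2 = det M1" .
  then show ?thesis using d1 d2 A B by simp
qed

lemma char_poly_mult_commute:
  fixes A B :: "real mat"
  assumes A: "A \<in> carrier_mat n n" and B: "B \<in> carrier_mat n n"
  shows "char_poly (A * B) = char_poly (B * A)"
proof -
  have AB: "A * B \<in> carrier_mat n n" and BA: "B * A \<in> carrier_mat n n" using A B by auto
  have neg: "- char_matrix M x = x \<cdot>\<^sub>m 1\<^sub>m n - M" if "M \<in> carrier_mat n n" for M :: "real mat" and x
    unfolding char_matrix_def using that by (intro eq_matI) auto
  have "poly (char_poly (A * B)) x = poly (char_poly (B * A)) x" for x
    unfolding char_poly_matrix[OF AB] char_poly_matrix[OF BA] neg[OF AB] neg[OF BA]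
    by (rule det_sub_mult_commute[OF A B])
  then show ?thesis by (intro poly_ext) simp
qed

lemma eigs_mult_commute:
  assumes "A \<in> carrier_mat n n" "B \<in> carrier_mat n n"
  shows "eigs (A * B) = eigs (B * A)"
  unfolding eigs_def using char_poly_mult_commute[OF assms] assms by simp

section \<open>Quadratic forms, traces and Ky Fan's inequality\<close>

definition quad_form :: "nat \<Rightarrow> real mat \<Rightarrow> (nat \<Rightarrow> real) \<Rightarrow> real" where
  "quad_form n Y z = (\<Sum>a<n. \<Sum>b<n. z a * Y $$ (a,b) * z b)"

definition mat_trace :: "nat \<Rightarrow> real mat \<Rightarrow> real" where "mat_trace n Y = (\<Sum>j<n. Y $$ (j,j))"

lemma power2_sum_eq_double_sum: "(\<Sum>a\<in>A. g a :: real)^2 = (\<Sum>a\<in>A. \<Sum>b\<in>A. g a * g b)"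
  by (simp add: power2_eq_square sum_product)

lemma sum_swap3: "(\<Sum>i\<in>I. \<Sum>a\<in>A. \<Sum>b\<in>B. f i a b) = (\<Sum>a\<in>A. \<Sum>b\<in>B. \<Sum>i\<in>I. (f i a b :: real))"
  by (subst sum.swap) (rule sum.cong[OF refl], rule sum.swap)

lemma scalar_prod_quad_form:
  assumes Y: "Y \<in> carrier_mat n n"
  shows "vec n z \<bullet> (Y *\<^sub>v vec n z) = quad_form n Y z"
proof -
  have v: "vec n z \<in> carrier_vec n" by simp
  show ?thesis
    unfolding quad_form_def scalar_prod_sum[OF mult_mat_vec_carrier[OF Y v]]
    by (intro sum.cong refl) (simp add: index_mult_mat_vec_sum[OF Y v] sum_distrib_left mult.assoc)
qed

lemma psd_quad_form_nonneg:
  assumes Y: "Y \<in> psd_cone n" shows "0 \<le> quad_form n Y z"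
proof -
  have "0 \<le> vec n z \<bullet> (Y *\<^sub>v vec n z)" using Y unfolding psd_cone_def by auto
  moreover have "Y \<in> carrier_mat n n" using Y unfolding psd_cone_def by auto
  ultimately show ?thesis by (simp add: scalar_prod_quad_form)
qed

lemma psd_coneI:
  assumes Y: "Y \<in> carrier_mat n n" and sym: "transpose_mat Y = Y" and q: "\<And>z. quad_form n Y z \<ge> 0"
  shows "Y \<in> psd_cone n"
  unfolding psd_cone_def
proof (intro CollectI conjI ballI Y sym)
  fix v :: "real vec" assume v: "v \<in> carrier_vec n"
  have "v \<bullet> (Y *\<^sub>v v) = quad_form n Y (\<lambda>i. v $ i)"
    unfolding quad_form_def scalar_prod_sum[OF mult_mat_vec_carrier[OF Y v]]
    by (intro sum.cong refl) (simp add: index_mult_mat_vec_sum[OF Y v] sum_distrib_left mult.assoc)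
  then show "0 \<le> v \<bullet> (Y *\<^sub>v v)" using q by simp
qed

lemma quad_form_gram:
  assumes B: "B \<in> carrier_mat n n"
  shows "quad_form n (transpose_mat B * B) z = (\<Sum>a<n. (\<Sum>b<n. B $$ (a,b) * z b)^2)"
proof -
  have Bt: "transpose_mat B \<in> carrier_mat n n" using B by simp
  have e: "(transpose_mat B * B) $$ (b,c) = (\<Sum>a<n. B $$ (a,b) * B $$ (a,c))" if "b < n" "c < n" for b c
    using that by (subst index_mult_mat_sum[OF Bt B]) (auto simp: carrier_matD[OF B] intro!: sum.cong)
  have "quad_form n (transpose_mat B * B) z = (\<Sum>b<n. \<Sum>c<n. \<Sum>a<n. (B $$ (a,b) * z b) * (B $$ (a,c) * z c))"
    unfolding quad_form_def
    by (intro sum.cong refl) (simp add: e sum_distrib_left sum_distrib_right algebra_simps del: index_mult_mat)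
  also have "\<dots> = (\<Sum>a<n. \<Sum>b<n. \<Sum>c<n. (B $$ (a,b) * z b) * (B $$ (a,c) * z c))"
    by (rule sum_swap3[symmetric])
  also have "\<dots> = (\<Sum>a<n. (\<Sum>b<n. B $$ (a,b) * z b)^2)" unfolding power2_sum_eq_double_sum by simp
  finally show ?thesis .
qed

lemma quad_form_gram_nonneg: "B \<in> carrier_mat n n \<Longrightarrow> quad_form n (transpose_mat B * B) z \<ge> 0"
  by (simp add: quad_form_gram sum_nonneg)

lemma trace_linear: "A \<in> carrier_mat n n \<Longrightarrow> B \<in> carrier_mat n n \<Longrightarrow>
   mat_trace n (x \<cdot>\<^sub>m A + y \<cdot>\<^sub>m B) = x * mat_trace n A + y * mat_trace n B"
  unfolding mat_trace_def by (simp add: sum.distrib sum_distrib_left)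

lemma quad_form_linear: "A \<in> carrier_mat n n \<Longrightarrow> B \<in> carrier_mat n n \<Longrightarrow>
   quad_form n (x \<cdot>\<^sub>m A + y \<cdot>\<^sub>m B) z = x * quad_form n A z + y * quad_form n B z"
  unfolding quad_form_def by (simp add: sum.distrib sum_distrib_left algebra_simps)

lemma orthonormal_parseval:
  assumes Z: "orthonormal n Z"
  shows "(\<Sum>i<n. (\<Sum>a<n. Z $$ (a,i) * y a)^2) = (\<Sum>a<n. (y a)^2)"
proof -
  have "(\<Sum>i<n. (\<Sum>a<n. Z $$ (a,i) * y a)^2) = (\<Sum>i<n. \<Sum>a<n. \<Sum>b<n. y a * y b * (Z $$ (a,i) * Z $$ (b,i)))"
    unfolding power2_sum_eq_double_sum by (simp add: algebra_simps)
  also have "\<dots> = (\<Sum>a<n. \<Sum>b<n. y a * y b * (\<Sum>i<n. Z $$ (a,i) * Z $$ (b,i)))"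
    unfolding sum_distrib_left by (rule sum_swap3)
  also have "\<dots> = (\<Sum>a<n. \<Sum>b<n. if a = b then y a * y b else 0)"
    by (intro sum.cong refl) (simp add: orthonormal_rows[OF Z])
  also have "\<dots> = (\<Sum>a<n. (y a)^2)" by (simp add: power2_eq_square)
  finally show ?thesis .
qed

lemma quad_form_diag_conj:
  assumes U: "U \<in> carrier_mat n n"
  shows "quad_form n (U * mat_diag n \<mu> * transpose_mat U) z = (\<Sum>l<n. \<mu> l * (\<Sum>a<n. U $$ (a,l) * z a)^2)"
proof -
  have "quad_form n (U * mat_diag n \<mu> * transpose_mat U) z = (\<Sum>a<n. \<Sum>b<n. z a * (\<Sum>l<n. U $$ (a,l) * \<mu> l * U $$ (b,l)) * z b)"
    unfolding quad_form_def by (intro sum.cong refl) (simp add: index_mult_diag_transpose[OF U])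
  also have "\<dots> = (\<Sum>a<n. \<Sum>b<n. \<Sum>l<n. \<mu> l * ((U $$ (a,l) * z a) * (U $$ (b,l) * z b)))"
    by (simp add: sum_distrib_left sum_distrib_right algebra_simps)
  also have "\<dots> = (\<Sum>l<n. \<mu> l * (\<Sum>a<n. \<Sum>b<n. (U $$ (a,l) * z a) * (U $$ (b,l) * z b)))"
    unfolding sum_distrib_left by (rule sum_swap3[symmetric])
  also have "\<dots> = (\<Sum>l<n. \<mu> l * (\<Sum>a<n. U $$ (a,l) * z a)^2)"
    unfolding power2_sum_eq_double_sum by simp
  finally show ?thesis .
qed

lemma quad_form_diag_conj_column:
  assumes U: "orthonormal n U" and i: "i < n"
  shows "quad_form n (U * mat_diag n \<mu> * transpose_mat U) (\<lambda>a. U $$ (a,i)) = \<mu> i"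
proof -
  have Uc: "U \<in> carrier_mat n n" using U orthonormal_def by auto
  have "quad_form n (U * mat_diag n \<mu> * transpose_mat U) (\<lambda>a. U $$ (a,i)) = (\<Sum>l<n. \<mu> l * (if l = i then 1 else 0))"
    unfolding quad_form_diag_conj[OF Uc] by (intro sum.cong refl) (simp add: orthonormal_columns[OF U] i)
  also have "\<dots> = \<mu> i" using i by (simp add: sum.delta' of_bool_def[symmetric])
  finally show ?thesis .
qed

lemma trace_diag_conj:
  assumes U: "orthonormal n U"
  shows "mat_trace n (U * mat_diag n \<mu> * transpose_mat U) = (\<Sum>l<n. \<mu> l)"
proof -
  have Uc: "U \<in> carrier_mat n n" using U orthonormal_def by auto
  have "mat_trace n (U * mat_diag n \<mu> * transpose_mat U) = (\<Sum>j<n. \<Sum>l<n. \<mu> l * (U $$ (j,l) * U $$ (j,l)))"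
    unfolding mat_trace_def by (intro sum.cong refl) (simp add: index_mult_diag_transpose[OF Uc] algebra_simps)
  also have "\<dots> = (\<Sum>l<n. \<mu> l * (\<Sum>j<n. U $$ (j,l) * U $$ (j,l)))"
    by (simp add: sum_distrib_left) (rule sum.swap)
  also have "\<dots> = (\<Sum>l<n. \<mu> l)" by (intro sum.cong refl) (simp add: orthonormal_columns[OF U])
  finally show ?thesis .
qed

lemma diag_conj_psd:
  assumes V: "V \<in> carrier_mat n n" and f: "\<And>l. l < n \<Longrightarrow> f l \<ge> 0"
  shows "V * mat_diag n f * transpose_mat V \<in> psd_cone n"
proof (rule psd_coneI)
  show "V * mat_diag n f * transpose_mat V \<in> carrier_mat n n" using V by simp
  show "transpose_mat (V * mat_diag n f * transpose_mat V) = V * mat_diag n f * transpose_mat V"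
    by (rule transpose_diag_conj[OF V])
  fix z show "quad_form n (V * mat_diag n f * transpose_mat V) z \<ge> 0"
    unfolding quad_form_diag_conj[OF V] by (rule sum_nonneg) (use f in simp)
qed

lemma diag_conj_convex_comb:
  fixes V :: "real mat"
  assumes V: "V \<in> carrier_mat n n" and h: "\<And>l. l < n \<Longrightarrow> h l = \<theta> * f l + (1 - \<theta>) * g l"
  shows "V * mat_diag n h * transpose_mat V
    = \<theta> \<cdot>\<^sub>m (V * mat_diag n f * transpose_mat V) + (1 - \<theta>) \<cdot>\<^sub>m (V * mat_diag n g * transpose_mat V)"
    (is "?H = \<theta> \<cdot>\<^sub>m ?F + (1 - \<theta>) \<cdot>\<^sub>m ?G")
proof (rule eq_matI)
  fix i j assume "i < dim_row (\<theta> \<cdot>\<^sub>m ?F + (1 - \<theta>) \<cdot>\<^sub>m ?G)" "j < dim_col (\<theta> \<cdot>\<^sub>m ?F + (1 - \<theta>) \<cdot>\<^sub>m ?G)"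
  then have i: "i < n" and j: "j < n" using V by auto
  have "?H $$ (i,j) = \<theta> * ?F $$ (i,j) + (1 - \<theta>) * ?G $$ (i,j)"
    unfolding index_mult_diag_transpose[OF V i j]
    by (simp add: h sum_distrib_left sum.distrib[symmetric] algebra_simps)
  then show "?H $$ (i,j) = (\<theta> \<cdot>\<^sub>m ?F + (1 - \<theta>) \<cdot>\<^sub>m ?G) $$ (i,j)"
    using i j V by simp
qed (use V in auto)

lemma sorted_rev_nth_antimono:
  assumes "sorted (rev L)" "i \<le> j" "j < length L"
  shows "L ! j \<le> L ! i"
proof -
  have "rev L ! (length L - 1 - j) \<le> rev L ! (length L - 1 - i)"
    by (rule sorted_nth_mono[OF assms(1)]) (use assms in auto)
  then show ?thesis using assms by (simp add: rev_nth)
qed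

lemma psd_eigs_nonneg:
  assumes Y: "Y \<in> psd_cone n" and i: "i < n"
  shows "0 \<le> eigs Y ! i"
proof -
  have "Y \<in> carrier_mat n n" "transpose_mat Y = Y" using Y unfolding psd_cone_def by auto
  then obtain U where U: "orthonormal n U" and dec: "Y = U * mat_diag n (\<lambda>i. eigs Y ! i) * transpose_mat U"
    using spectral_decomposition by blast
  show ?thesis
    using psd_quad_form_nonneg[OF Y, of "\<lambda>a. U $$ (a,i)"] quad_form_diag_conj_column[OF U i, of "\<lambda>i. eigs Y ! i"] dec by simp
qed

lemma eigs_antimono:
  assumes "Y \<in> carrier_mat n n" "transpose_mat Y = Y" "i \<le> j" "j < n"
  shows "eigs Y ! j \<le> eigs Y ! i"
  using spectral_decomposition[OF assms(1,2)] sorted_rev_nth_antimono assms(3,4) by metis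

lemma weighted_sum_le_top_sum:
  fixes f q :: "nat \<Rightarrow> real"
  assumes sorted: "\<And>i j. i \<le> j \<Longrightarrow> j < n \<Longrightarrow> f j \<le> f i"
    and q: "\<And>l. l < n \<Longrightarrow> 0 \<le> q l \<and> q l \<le> 1"
    and sq: "(\<Sum>l<n. q l) = real m" and mn: "m \<le> n"
  shows "(\<Sum>l<n. f l * q l) \<le> (\<Sum>l<m. f l)"
proof (cases "n = 0")
  case True
  then show ?thesis using mn by simp
next
  case False
  define \<theta> where "\<theta> = f (min m (n - 1))"
  have hi: "f l \<ge> \<theta>" if "l < m" for l using sorted[of l "min m (n-1)"] that mn False unfolding \<theta>_def by auto
  have lo: "f l \<le> \<theta>" if "m \<le> l" "l < n" for l using sorted[of "min m (n-1)" l] that unfolding \<theta>_def by auto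
  have split: "{..<n} = {..<m} \<union> {m..<n}" using mn by auto
  have disj: "{..<m} \<inter> {m..<n} = {}" by auto
  have S: "(\<Sum>l<n. g l) = (\<Sum>l<m. g l) + (\<Sum>l\<in>{m..<n}. g l)" for g :: "nat \<Rightarrow> real"
    unfolding split by (rule sum.union_disjoint) (use disj in auto)
  have "(\<Sum>l<m. f l) - (\<Sum>l<n. f l * q l) = (\<Sum>l<m. f l * (1 - q l)) - (\<Sum>l\<in>{m..<n}. f l * q l)"
    unfolding S[of "\<lambda>l. f l * q l"] by (simp add: algebra_simps sum_subtractf)
  also have "\<dots> \<ge> (\<Sum>l<m. \<theta> * (1 - q l)) - (\<Sum>l\<in>{m..<n}. \<theta> * q l)"
  proof -
    have "(\<Sum>l<m. f l * (1 - q l)) \<ge> (\<Sum>l<m. \<theta> * (1 - q l))"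
      by (rule sum_mono) (use hi q mn in \<open>auto intro!: mult_right_mono\<close>)
    moreover have "(\<Sum>l\<in>{m..<n}. f l * q l) \<le> (\<Sum>l\<in>{m..<n}. \<theta> * q l)"
      by (rule sum_mono) (use lo q in \<open>auto intro!: mult_right_mono\<close>)
    ultimately show ?thesis by linarith
  qed
  also have "(\<Sum>l<m. \<theta> * (1 - q l)) - (\<Sum>l\<in>{m..<n}. \<theta> * q l) = \<theta> * (real m - (\<Sum>l<n. q l))"
    unfolding S[of q] by (simp add: algebra_simps sum_subtractf sum_distrib_left)
  also have "\<dots> = 0" using sq by simp
  finally show ?thesis by simp
qed

lemma abel_weighted_sum_le:
  fixes c y \<mu> :: "nat \<Rightarrow> real"
  assumes c: "\<And>i j. i \<le> j \<Longrightarrow> j < k \<Longrightarrow> c j \<le> c i" and c0: "\<And>i. i < k \<Longrightarrow> 0 \<le> c i"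
    and part: "\<And>j. j \<le> k \<Longrightarrow> (\<Sum>i<j. y i) \<le> (\<Sum>i<j. \<mu> i)"
  shows "(\<Sum>i<k. c i * y i) \<le> (\<Sum>i<k. c i * \<mu> i)"
proof -
  define d where "d i = \<mu> i - y i" for i
  have D: "(\<Sum>i<j. d i) \<ge> 0" if "j \<le> k" for j using part[OF that] unfolding d_def by (simp add: sum_subtractf)
  have main: "(\<Sum>i<Suc j. c i * d i) \<ge> c j * (\<Sum>i<Suc j. d i)" if "Suc j \<le> k" for j
    using that
  proof (induction j)
    case 0
    then show ?case by simp
  next
    case (Suc j)
    have e: "(\<Sum>i<Suc (Suc j). c i * d i) = (\<Sum>i<Suc j. c i * d i) + c (Suc j) * d (Suc j)" by simp
    have i1: "(\<Sum>i<Suc j. c i * d i) \<ge> c j * (\<Sum>i<Suc j. d i)" using Suc by simp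
    have i2: "c j * (\<Sum>i<Suc j. d i) \<ge> c (Suc j) * (\<Sum>i<Suc j. d i)"
      by (rule mult_right_mono) (use c[of j "Suc j"] D[of "Suc j"] Suc.prems in auto)
    have "c (Suc j) * (\<Sum>i<Suc (Suc j). d i) = c (Suc j) * (\<Sum>i<Suc j. d i) + c (Suc j) * d (Suc j)"
      by (simp add: algebra_simps)
    then show ?case using e i1 i2 by linarith
  qed
  have "(\<Sum>i<k. c i * d i) \<ge> 0"
  proof (cases k)
    case 0 then show ?thesis by simp
  next
    case (Suc j)
    then have "(\<Sum>i<k. c i * d i) \<ge> c j * (\<Sum>i<k. d i)" using main[of j] by simp
    moreover have "c j * (\<Sum>i<k. d i) \<ge> 0" using c0[of j] D[of k] Suc by simp
    ultimately show ?thesis by linarith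
  qed
  then show ?thesis unfolding d_def by (simp add: algebra_simps sum_subtractf)
qed

lemma ky_fan_bound:
  assumes U: "orthonormal n U" and sorted: "\<And>i j. i \<le> j \<Longrightarrow> j < n \<Longrightarrow> \<mu> j \<le> \<mu> i"
    and Z: "orthonormal n Z" and mn: "m \<le> n"
  shows "(\<Sum>i<m. quad_form n (U * mat_diag n \<mu> * transpose_mat U) (\<lambda>a. Z $$ (a,i))) \<le> (\<Sum>l<m. \<mu> l)"
proof -
  have Uc: "U \<in> carrier_mat n n" using U orthonormal_def by auto
  define w where "w i l = (\<Sum>a<n. U $$ (a,l) * Z $$ (a,i))^2" for i l
  define q where "q l = (\<Sum>i<m. w i l)" for l
  have "(\<Sum>i<m. quad_form n (U * mat_diag n \<mu> * transpose_mat U) (\<lambda>a. Z $$ (a,i))) = (\<Sum>i<m. \<Sum>l<n. \<mu> l * w i l)"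
    unfolding quad_form_diag_conj[OF Uc] w_def by simp
  also have "\<dots> = (\<Sum>l<n. \<mu> l * q l)" unfolding q_def sum_distrib_left by (rule sum.swap)
  also have "\<dots> \<le> (\<Sum>l<m. \<mu> l)"
  proof (rule weighted_sum_le_top_sum[OF sorted _ _ mn])
    fix l assume l: "l < n"
    have "q l \<le> (\<Sum>i<n. w i l)" unfolding q_def
      by (rule sum_mono2) (use mn in \<open>auto simp: w_def\<close>)
    also have "\<dots> = (\<Sum>a<n. (U $$ (a,l))^2)"
      unfolding w_def using orthonormal_parseval[OF Z, of "\<lambda>a. U $$ (a,l)"] by (simp add: mult.commute)
    also have "\<dots> = 1" using orthonormal_columns[OF U l l] by (simp add: power2_eq_square)
    finally show "0 \<le> q l \<and> q l \<le> 1" unfolding q_def w_def by (auto intro: sum_nonneg)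
  next
    have "(\<Sum>l<n. q l) = (\<Sum>i<m. \<Sum>l<n. w i l)" unfolding q_def by (rule sum.swap)
    also have "\<dots> = (\<Sum>i<m. 1)"
    proof (rule sum.cong[OF refl])
      fix i assume i: "i \<in> {..<m}"
      have "(\<Sum>l<n. w i l) = (\<Sum>a<n. (Z $$ (a,i))^2)" unfolding w_def by (rule orthonormal_parseval[OF U])
      also have "\<dots> = 1" using orthonormal_columns[OF Z, of i i] i mn by (simp add: power2_eq_square)
      finally show "(\<Sum>l<n. w i l) = 1" .
    qed
    finally show "(\<Sum>l<n. q l) = real m" by simp
  qed
  finally show ?thesis .
qed

lemma gram_psd: "B \<in> carrier_mat n n \<Longrightarrow> transpose_mat B * B \<in> psd_cone n"
  by (rule psd_coneI)
    (simp_all add: quad_form_gram_nonneg transpose_mult[OF square_transpose_carrier_mat])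

text \<open>Matrices with the same spectrum are conjugate, so quadratic forms along an orthonormal basis
  of one of them are quadratic forms along an orthonormal basis of the other.\<close>

lemma quad_form_orthonormal_transfer:
  assumes X: "X \<in> carrier_mat n n" "transpose_mat X = X" and W: "W \<in> carrier_mat n n" "transpose_mat W = W"
    and eigs: "eigs X = eigs W" and V: "orthonormal n V"
  obtains Z where "orthonormal n Z"
    and "\<And>i. i < n \<Longrightarrow> quad_form n X (\<lambda>a. Z $$ (a,i)) = quad_form n W (\<lambda>a. V $$ (a,i))"
    and "mat_trace n X = mat_trace n W"
proof -
  define \<mu> where "\<mu> i = eigs W ! i" for i
  obtain U1 where U1: "orthonormal n U1" and X_dec: "X = U1 * mat_diag n \<mu> * transpose_mat U1"
    using spectral_decomposition[OF X] unfolding \<mu>_def eigs by blast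
  obtain V1 where V1: "orthonormal n V1" and W_dec: "W = V1 * mat_diag n \<mu> * transpose_mat V1"
    using spectral_decomposition[OF W] unfolding \<mu>_def by blast
  have U1c: "U1 \<in> carrier_mat n n" and V1c: "V1 \<in> carrier_mat n n" and Vc: "V \<in> carrier_mat n n"
    using U1 V1 V by (auto simp: orthonormal_def)
  define Z where "Z = U1 * (transpose_mat V1 * V)"
  have "transpose_mat U1 * Z = transpose_mat V1 * V"
    unfolding Z_def using U1 V1c Vc
    by (simp add: assoc_mult_mat[of _ n n _ n _ n, symmetric] orthonormal_def)
  moreover have Zc: "Z \<in> carrier_mat n n" unfolding Z_def using U1c V1c Vc by simp
  ultimately have proj: "(\<Sum>a<n. U1 $$ (a,l) * Z $$ (a,i)) = (\<Sum>a<n. V1 $$ (a,l) * V $$ (a,i))"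
    if "l < n" "i < n" for l i
    using index_mult_mat_sum[OF square_transpose_carrier_mat[OF U1c] Zc that]
      index_mult_mat_sum[OF square_transpose_carrier_mat[OF V1c] Vc that] that U1c V1c
    by simp
  show ?thesis
  proof
    show "orthonormal n Z" unfolding Z_def by (intro orthonormal_mult orthonormal_transpose U1 V1 V)
    show "quad_form n X (\<lambda>a. Z $$ (a,i)) = quad_form n W (\<lambda>a. V $$ (a,i))" if "i < n" for i
      unfolding X_dec W_dec quad_form_diag_conj[OF U1c] quad_form_diag_conj[OF V1c]
      by (intro sum.cong refl) (simp add: proj that)
    show "mat_trace n X = mat_trace n W"
      unfolding X_dec W_dec trace_diag_conj[OF U1] trace_diag_conj[OF V1] ..
  qed
qed

lemma sym_pd_lambda_min_pos:
  assumes C: "sym_pd n C" and n: "n \<ge> 1"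
  shows "lambda_min C > 0"
proof -
  have Cc: "C \<in> carrier_mat n n" and sym: "transpose_mat C = C" using C unfolding sym_pd_def by auto
  define \<mu> where "\<mu> i = eigs C ! i" for i
  obtain U where U: "orthonormal n U" and dec: "C = U * mat_diag n \<mu> * transpose_mat U"
    using spectral_decomposition[OF Cc sym] unfolding \<mu>_def by blast
  define i where "i = n - 1"
  have i: "i < n" using n unfolding i_def by simp
  define z where "z a = U $$ (a, i)" for a
  have "(\<Sum>a<n. (z a)^2) = 1" using orthonormal_columns[OF U i i] unfolding z_def by (simp add: power2_eq_square)
  then obtain a0 where a0: "a0 < n" "z a0 \<noteq> 0"
    by (metis (mono_tags, lifting) lessThan_iff power_zero_numeral sum.neutral zero_neq_one)
  then have "vec n z \<noteq> 0\<^sub>v n" by (metis index_vec index_zero_vec(1))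
  then have "vec n z \<bullet> (C *\<^sub>v vec n z) > 0" using C unfolding sym_pd_def by auto
  then have "quad_form n C z > 0" using scalar_prod_quad_form[OF Cc] by simp
  moreover have "quad_form n C z = \<mu> i" unfolding z_def dec by (rule quad_form_diag_conj_column[OF U i])
  moreover have "lambda_min C = \<mu> i" unfolding \<mu>_def lambda_min_def eig_def i_def using Cc by simp
  ultimately show ?thesis by simp
qed

lemma xdown_eq_nth:
  fixes x :: "nat \<Rightarrow> real" and n :: nat
  defines "xd \<equiv> rev (sort (map x [0..<n]))"
  obtains p where "p permutes {..<n}" "\<And>i. i < n \<Longrightarrow> xd ! i = x (p i)" "sorted (rev xd)" "length xd = n"
    "\<And>i. 1 \<le> i \<Longrightarrow> xdown n x i = xd ! (i - 1)"
proof -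
  have m: "mset xd = mset (map x [0..<n])" unfolding xd_def by simp
  obtain p where p: "p permutes {..<length (map x [0..<n])}" and pl: "permute_list p (map x [0..<n]) = xd"
    using mset_eq_permutation[OF m] by blast
  have p': "p permutes {..<n}" using p by simp
  have "xd ! i = x (p i)" if "i < n" for i
    using permute_list_nth[OF p, of i] that pl permutes_in_image[OF p', of i] by simp
  moreover have "xdown n x i = xd ! (i - 1)" if "1 \<le> i" for i
    using that unfolding xdown_def xd_def by simp
  ultimately show ?thesis using that p' unfolding xd_def by simp
qed

lemma xdown_le_one:
  assumes "\<And>i. i < n \<Longrightarrow> x i \<le> 1" and "1 \<le> i" "i \<le> n"
  shows "xdown n x i \<le> 1"
proof -
  obtain p where p: "p permutes {..<n}" and xd: "\<And>i. i < n \<Longrightarrow> rev (sort (map x [0..<n])) ! i = x (p i)"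
    and xdn: "\<And>i. 1 \<le> i \<Longrightarrow> xdown n x i = rev (sort (map x [0..<n])) ! (i - 1)"
    using xdown_eq_nth[where x = x and n = n] by metis
  have "i - 1 < n" using assms by simp
  then show ?thesis using xd xdn assms permutes_in_image[OF p] by simp
qed

text \<open>The weights \<open>\<Sum>\<^sub>i<k V\<^sub>j\<^sub>i\<^sup>2\<close> lie in \<open>[0, 1]\<close> and add up to \<open>k\<close>, so the weighted sum of the \<open>x\<^sub>j\<close> is at most
  the sum of the \<open>k\<close> largest ones.\<close>

lemma xdown_bound:
  fixes x :: "nat \<Rightarrow> real"
  assumes V: "orthonormal n V" and kn: "k \<le> n"
  shows "(\<Sum>i<k. \<Sum>j<n. x j * (V $$ (j,i))^2) \<le> (\<Sum>i = 1..k. xdown n x i)"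
proof -
  define xd where "xd = rev (sort (map x [0..<n]))"
  obtain p where p: "p permutes {..<n}" and xdp: "\<And>i. i < n \<Longrightarrow> xd ! i = x (p i)" and srt: "sorted (rev xd)"
    and len: "length xd = n" and xdn: "\<And>i. 1 \<le> i \<Longrightarrow> xdown n x i = xd ! (i - 1)"
    using xdown_eq_nth[where x = x and n = n] unfolding xd_def by metis
  define q where "q j = (\<Sum>i<k. (V $$ (j,i))^2)" for j
  have "(\<Sum>i<k. \<Sum>j<n. x j * (V $$ (j,i))^2) = (\<Sum>j<n. x j * q j)"
    unfolding q_def sum_distrib_left by (rule sum.swap)
  also have "\<dots> = (\<Sum>j<n. xd ! j * q (p j))"
    using sum.permute[OF p, of "\<lambda>j. x j * q j"] xdp by (simp add: comp_def)
  also have "\<dots> \<le> (\<Sum>j<k. xd ! j)"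
  proof (rule weighted_sum_le_top_sum[OF _ _ _ kn])
    show "xd ! j \<le> xd ! i" if "i \<le> j" "j < n" for i j using sorted_rev_nth_antimono[OF srt] len that by simp
  next
    fix l assume l: "l < n"
    then have pl: "p l < n" using permutes_in_image[OF p] by simp
    have "q (p l) \<le> (\<Sum>i<n. (V $$ (p l,i))^2)" unfolding q_def by (rule sum_mono2) (use kn in auto)
    also have "\<dots> = 1" using orthonormal_rows[OF V pl pl] by (simp add: power2_eq_square)
    finally show "0 \<le> q (p l) \<and> q (p l) \<le> 1" unfolding q_def by (auto intro: sum_nonneg)
  next
    have "(\<Sum>l<n. q (p l)) = (\<Sum>l<n. q l)" using sum.permute[OF p, of q] by (simp add: comp_def)
    also have "\<dots> = (\<Sum>i<k. \<Sum>j<n. (V $$ (j,i))^2)" unfolding q_def by (rule sum.swap)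
    also have "\<dots> = (\<Sum>i<k. 1)"
      using orthonormal_columns[OF V] kn by (intro sum.cong refl) (simp add: power2_eq_square)
    finally show "(\<Sum>l<n. q (p l)) = real k" by simp
  qed
  also have "\<dots> = (\<Sum>i = 1..k. xdown n x i)"
    using xdn by (simp add: sum.atLeast1_atMost_eq)
  finally show ?thesis .
qed

section \<open>Concave functions on the hypersimplex\<close>

definition hypersimplex :: "nat \<Rightarrow> nat \<Rightarrow> (nat \<Rightarrow> real) set" where
  "hypersimplex m r = {y. (\<forall>i<m. 0 \<le> y i \<and> y i \<le> 1) \<and> (\<forall>i\<ge>m. y i = 0) \<and> (\<Sum>i<m. y i) = real r}"

definition fractional_coords :: "nat \<Rightarrow> (nat \<Rightarrow> real) \<Rightarrow> nat set" where
  "fractional_coords m y = {i. i < m \<and> 0 < y i \<and> y i < 1}"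

lemma fractional_coords_not_singleton:
  assumes y: "y \<in> hypersimplex m r" and i: "i \<in> fractional_coords m y"
  obtains j where "j \<in> fractional_coords m y" "j \<noteq> i"
proof -
  have "\<exists>j. j \<in> fractional_coords m y \<and> j \<noteq> i"
  proof (rule ccontr)
    assume "\<not> ?thesis"
    then have "y l \<in> \<int>" if "l \<in> {..<m} - {i}" for l
      using that y unfolding hypersimplex_def fractional_coords_def
      by (metis (mono_tags, lifting) Diff_iff Ints_0 Ints_1 lessThan_iff mem_Collect_eq order_less_le singletonI)
    then have others: "(\<Sum>l\<in>{..<m} - {i}. y l) \<in> \<int>" by (rule Ints_sum)
    have "(\<Sum>l<m. y l) = y i + (\<Sum>l\<in>{..<m} - {i}. y l)"
      using i unfolding fractional_coords_def by (simp add: sum.remove)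
    then have "y i = real r - (\<Sum>l\<in>{..<m} - {i}. y l)" using y unfolding hypersimplex_def by simp
    then have "y i \<in> \<int>" using others by simp
    moreover have "0 < y i" "y i < 1" using i unfolding fractional_coords_def by auto
    ultimately show False by (metis Ints_cases of_int_0_less_iff of_int_less_1_iff not_le zless_imp_add1_zle add_0)
  qed
  then show ?thesis using that by blast
qed

lemma hypersimplex_transfer:
  assumes y: "y \<in> hypersimplex m r" and i: "i \<in> fractional_coords m y" and j: "j \<in> fractional_coords m y"
    and ij: "i \<noteq> j" and t: "0 \<le> y i + t" "y i + t \<le> 1" "0 \<le> y j - t" "y j - t \<le> 1"
    and boundary: "y i + t \<in> {0, 1} \<or> y j - t \<in> {0, 1}"
  shows "y(i := y i + t, j := y j - t) \<in> hypersimplex m r"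
    and "fractional_coords m (y(i := y i + t, j := y j - t)) \<subset> fractional_coords m y"
proof -
  let ?y = "y(i := y i + t, j := y j - t)"
  have im: "i < m" and jm: "j < m" using i j unfolding fractional_coords_def by auto
  have upd: "?y l = y l + ((if l = i then t else 0) - (if l = j then t else 0))" for l
    using ij by auto
  have "(\<Sum>l<m. ?y l) = (\<Sum>l<m. y l)"
    unfolding upd sum.distrib using im jm by (simp add: sum_subtractf)
  then show "?y \<in> hypersimplex m r"
    using y t im jm unfolding hypersimplex_def by auto
  show "fractional_coords m ?y \<subset> fractional_coords m y"
  proof
    show "fractional_coords m ?y \<subseteq> fractional_coords m y"
      using i j unfolding fractional_coords_def by auto
    show "fractional_coords m ?y \<noteq> fractional_coords m y"
    proof -
      have "i \<notin> fractional_coords m ?y \<or> j \<notin> fractional_coords m ?y"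
        using boundary ij unfolding fractional_coords_def by auto
      then show ?thesis using i j by auto
    qed
  qed
qed

lemma hypersimplex_split:
  assumes y: "y \<in> hypersimplex m r" and frac: "fractional_coords m y \<noteq> {}"
  obtains yp ym \<theta> where "yp \<in> hypersimplex m r" "ym \<in> hypersimplex m r"
    "fractional_coords m yp \<subset> fractional_coords m y" "fractional_coords m ym \<subset> fractional_coords m y"
    "0 \<le> \<theta>" "\<theta> \<le> 1" "(\<lambda>l. \<theta> * yp l + (1 - \<theta>) * ym l) = y"
proof -
  obtain i where i: "i \<in> fractional_coords m y" using frac by blast
  obtain j where j: "j \<in> fractional_coords m y" and ij: "i \<noteq> j"
    using fractional_coords_not_singleton[OF y i] by metis
  have yi: "0 < y i" "y i < 1" and yj: "0 < y j" "y j < 1"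
    using i j unfolding fractional_coords_def by auto
  define ep where "ep = min (1 - y i) (y j)"
  define em where "em = min (y i) (1 - y j)"
  have ep: "ep > 0" and em: "em > 0" unfolding ep_def em_def using yi yj by auto
  define yp where "yp = y(i := y i + ep, j := y j - ep)"
  define ym where "ym = y(i := y i + - em, j := y j - - em)"
  have "0 \<le> y i + ep" "y i + ep \<le> 1" "0 \<le> y j - ep" "y j - ep \<le> 1"
    "y i + ep \<in> {0, 1} \<or> y j - ep \<in> {0, 1}"
    using yi yj unfolding ep_def by auto
  note yp = hypersimplex_transfer[OF y i j ij this, folded yp_def]
  have "0 \<le> y i + - em" "y i + - em \<le> 1" "0 \<le> y j - - em" "y j - - em \<le> 1"
    "y i + - em \<in> {0, 1} \<or> y j - - em \<in> {0, 1}"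
    using yi yj unfolding em_def by auto
  note ym = hypersimplex_transfer[OF y i j ij this, folded ym_def]
  define \<theta> where "\<theta> = em / (ep + em)"
  have \<theta>: "0 \<le> \<theta>" "\<theta> \<le> 1" unfolding \<theta>_def using ep em by auto
  have balance: "\<theta> * ep = (1 - \<theta>) * em" unfolding \<theta>_def using ep em by (simp add: field_simps)
  have "\<theta> * yp l + (1 - \<theta>) * ym l = y l" for l
    by (cases "l = i"; cases "l = j") (use ij balance in \<open>simp_all add: yp_def ym_def algebra_simps\<close>)
  then show ?thesis using that yp ym \<theta> by blast
qed

lemma concave_hypersimplex_bound:
  fixes F :: "(nat \<Rightarrow> real) \<Rightarrow> real"
  assumes conc: "\<And>y z \<theta>. y \<in> hypersimplex m r \<Longrightarrow> z \<in> hypersimplex m r \<Longrightarrow> 0 \<le> \<theta> \<Longrightarrow> \<theta> \<le> 1 \<Longrightarrow>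
      \<theta> * F y + (1 - \<theta>) * F z \<le> F (\<lambda>i. \<theta> * y i + (1 - \<theta>) * z i)"
    and vertex: "\<And>y. y \<in> hypersimplex m r \<Longrightarrow> \<forall>i<m. y i = 0 \<or> y i = 1 \<Longrightarrow> L \<le> F y"
    and y: "y \<in> hypersimplex m r"
  shows "L \<le> F y"
  using y
proof (induction "card (fractional_coords m y)" arbitrary: y rule: less_induct)
  case less
  show ?case
  proof (cases "fractional_coords m y = {}")
    case True
    then have "\<forall>i<m. y i = 0 \<or> y i = 1"
      using less.prems unfolding hypersimplex_def fractional_coords_def by fastforce
    then show ?thesis using vertex less.prems by blast
  next
    case False
    obtain yp ym \<theta> where yp: "yp \<in> hypersimplex m r" "fractional_coords m yp \<subset> fractional_coords m y"
      and ym: "ym \<in> hypersimplex m r" "fractional_coords m ym \<subset> fractional_coords m y"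
      and \<theta>: "0 \<le> \<theta>" "\<theta> \<le> 1" and y_eq: "(\<lambda>l. \<theta> * yp l + (1 - \<theta>) * ym l) = y"
      using hypersimplex_split[OF less.prems False] by metis
    have "L \<le> F yp" "L \<le> F ym"
      using less.hyps yp ym psubset_card_mono[of "fractional_coords m y"]
      by (auto simp: fractional_coords_def)
    then have "\<theta> * L + (1 - \<theta>) * L \<le> \<theta> * F yp + (1 - \<theta>) * F ym"
      using \<theta> by (intro add_mono mult_left_mono) auto
    also have "\<dots> \<le> F y" using conc[OF yp(1) ym(1) \<theta>] y_eq by simp
    finally show ?thesis by (simp add: algebra_simps)
  qed
qed

section \<open>Bounds on the concave envelope of \<open>\<Phi>\<^sub>s\<close>\<close>

lemma ln_le_tangent: "(b::real) > 0 \<Longrightarrow> y > 0 \<Longrightarrow> ln y \<le> ln b + y / b - 1"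
  using ln_le_minus_one[of "y / b"] by (simp add: ln_div)

lemma sum_lessThan_split:
  fixes g :: "nat \<Rightarrow> 'a::comm_monoid_add"
  shows "k \<le> m \<Longrightarrow> (\<Sum>i<m. g i) = (\<Sum>i<k. g i) + (\<Sum>i\<in>{k..<m}. g i)"
  using sum.atLeastLessThan_concat[of 0 k m g] by (simp add: lessThan_atLeast0)

lemma Phi_eq_sum_ln:
  assumes "\<And>i. i < s \<Longrightarrow> eigs Y ! i + t > 0"
  shows "Phi s Y t = ereal (\<Sum>i<s. ln (eigs Y ! i + t))"
proof -
  have "Phi s Y t = (\<Sum>i<s. eln (eig Y (Suc i) + t))"
    unfolding Phi_def by (simp add: sum.atLeast1_atMost_eq)
  also have "\<dots> = (\<Sum>i<s. ereal (ln (eigs Y ! i + t)))"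
    by (intro sum.cong refl) (use assms in \<open>simp add: eig_def eln_def\<close>)
  finally show ?thesis by simp
qed

lemma sum_ln_le_tangents:
  fixes k s :: nat and y \<beta> :: "nat \<Rightarrow> real"
  assumes ks: "k \<le> s" and a: "a > 0" and \<beta>: "\<And>i. i < k \<Longrightarrow> \<beta> i > 0" and y: "\<And>i. i < s \<Longrightarrow> y i > 0"
  shows "(\<Sum>i<s. ln (y i)) \<le> (\<Sum>i<k. ln (\<beta> i) + y i / \<beta> i - 1) + (\<Sum>i\<in>{k..<s}. ln a + y i / a - 1)"
  unfolding sum_lessThan_split[OF ks]
proof (rule add_mono; rule sum_mono)
  show "ln (y i) \<le> ln (\<beta> i) + y i / \<beta> i - 1" if "i \<in> {..<k}" for i
    using ln_le_tangent[OF \<beta>, of i "y i"] y[of i] ks that by auto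
  show "ln (y i) \<le> ln a + y i / a - 1" if "i \<in> {k..<s}" for i
    using ln_le_tangent[OF a, of "y i"] y[of i] that by auto
qed

lemma weighted_ky_fan:
  assumes U: "orthonormal n U" and \<mu>: "\<And>i j. i \<le> j \<Longrightarrow> j < n \<Longrightarrow> \<mu> j \<le> \<mu> i"
    and Z: "orthonormal n Z" and kn: "k \<le> n"
    and c: "\<And>i j. i \<le> j \<Longrightarrow> j < k \<Longrightarrow> c j \<le> c i" and c0: "\<And>i. i < k \<Longrightarrow> 0 \<le> c i"
  shows "(\<Sum>i<k. c i * quad_form n (U * mat_diag n \<mu> * transpose_mat U) (\<lambda>a. Z $$ (a,i)))
    \<le> (\<Sum>i<k. c i * \<mu> i)"
proof (rule abel_weighted_sum_le[OF c c0])
  fix j assume "j \<le> k"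
  then show "(\<Sum>i<j. quad_form n (U * mat_diag n \<mu> * transpose_mat U) (\<lambda>a. Z $$ (a, i))) \<le> (\<Sum>i<j. \<mu> i)"
    using ky_fan_bound[OF U \<mu> Z, where m = j] kn by simp
qed

lemma Phi_affine_majorant:
  fixes Z Y :: "real mat" and \<beta> :: "nat \<Rightarrow> real" and a t :: real and k s n :: nat
  assumes Z: "orthonormal n Z" and ks: "k \<le> s" and sn: "s \<le> n" and t: "t > 0" and a: "a > 0"
    and \<beta>a: "\<And>i. i < k \<Longrightarrow> a \<le> \<beta> i"
    and \<beta>dec: "\<And>i j. i \<le> j \<Longrightarrow> j < k \<Longrightarrow> \<beta> j \<le> \<beta> i"
    and Y: "Y \<in> psd_cone n"
  shows "Phi s Y t \<le> ereal ((\<Sum>i<k. ln (\<beta> i)) + real (s - k) * ln a - real s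
      + t * ((\<Sum>i<k. 1 / \<beta> i) + real (s - k) / a)
      + mat_trace n Y / a - (\<Sum>i<k. (1 / a - 1 / \<beta> i) * quad_form n Y (\<lambda>j. Z $$ (j,i))))"
proof -
  define \<mu> where "\<mu> i = eigs Y ! i" for i
  have Yc: "Y \<in> carrier_mat n n" and sym: "transpose_mat Y = Y" using Y unfolding psd_cone_def by auto
  obtain U where U: "orthonormal n U" and dec: "Y = U * mat_diag n \<mu> * transpose_mat U"
    using spectral_decomposition[OF Yc sym] unfolding \<mu>_def by blast
  have \<mu>0: "0 \<le> \<mu> i" if "i < n" for i unfolding \<mu>_def by (rule psd_eigs_nonneg[OF Y that])
  have \<mu>dec: "\<mu> j \<le> \<mu> i" if "i \<le> j" "j < n" for i j unfolding \<mu>_def by (rule eigs_antimono[OF Yc sym that])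
  have \<beta>pos: "\<beta> i > 0" if "i < k" for i using \<beta>a[OF that] a by simp
  define c where "c i = 1 / a - 1 / \<beta> i" for i
  have "(\<Sum>i<k. c i * quad_form n Y (\<lambda>j. Z $$ (j,i))) \<le> (\<Sum>i<k. c i * \<mu> i)"
    unfolding dec
  proof (rule weighted_ky_fan[OF U \<mu>dec Z])
    show "c j \<le> c i" if "i \<le> j" "j < k" for i j
      unfolding c_def using \<beta>dec[OF that] \<beta>pos that by (simp add: frac_le)
    show "0 \<le> c i" if "i < k" for i
      unfolding c_def using \<beta>a[OF that] a by (simp add: frac_le)
  qed (use ks sn in auto)
  moreover have "mat_trace n Y = (\<Sum>i<k. \<mu> i) + (\<Sum>i\<in>{k..<n}. \<mu> i)"
    unfolding dec trace_diag_conj[OF U] by (rule sum_lessThan_split) (use ks sn in simp)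
  moreover have "Phi s Y t = ereal (\<Sum>i<s. ln (\<mu> i + t))"
    unfolding \<mu>_def
  proof (rule Phi_eq_sum_ln)
    show "eigs Y ! i + t > 0" if "i < s" for i using \<mu>0[of i] t sn that unfolding \<mu>_def by simp
  qed
  moreover have "(\<Sum>i<s. ln (\<mu> i + t))
      \<le> (\<Sum>i<k. ln (\<beta> i) + (\<mu> i + t) / \<beta> i - 1) + (\<Sum>i\<in>{k..<s}. ln a + (\<mu> i + t) / a - 1)"
    by (rule sum_ln_le_tangents[OF ks a \<beta>pos]) (use \<mu>0 t sn in \<open>auto intro: add_nonneg_pos\<close>)
  moreover have "(\<Sum>i\<in>{k..<s}. \<mu> i / a) \<le> (\<Sum>i\<in>{k..<n}. \<mu> i / a)"
    by (rule sum_mono2) (use sn \<mu>0 a in auto)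
  ultimately show ?thesis
    using ks by (simp add: c_def sum.distrib sum_subtractf add_divide_distrib sum_distrib_left
        sum_divide_distrib[symmetric] diff_divide_distrib algebra_simps)
qed

lemma concave_on_psd_affine:
  fixes c0 e :: real and c :: "nat \<Rightarrow> real" and Z :: "real mat"
  shows "concave_on_psd n (\<lambda>Y. c0 + mat_trace n Y / e - (\<Sum>i<k. c i * quad_form n Y (\<lambda>j. Z $$ (j,i))))"
  unfolding concave_on_psd_def
proof (intro ballI allI impI)
  fix X Y :: "real mat" and \<theta> :: real
  assume "X \<in> psd_cone n" "Y \<in> psd_cone n"
  then have X: "X \<in> carrier_mat n n" and Y: "Y \<in> carrier_mat n n" unfolding psd_cone_def by auto
  show "\<theta> * (c0 + mat_trace n X / e - (\<Sum>i<k. c i * quad_form n X (\<lambda>j. Z $$ (j, i)))) +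
         (1 - \<theta>) * (c0 + mat_trace n Y / e - (\<Sum>i<k. c i * quad_form n Y (\<lambda>j. Z $$ (j, i))))
         \<le> c0 + mat_trace n (\<theta> \<cdot>\<^sub>m X + (1 - \<theta>) \<cdot>\<^sub>m Y) / e -
            (\<Sum>i<k. c i * quad_form n (\<theta> \<cdot>\<^sub>m X + (1 - \<theta>) \<cdot>\<^sub>m Y) (\<lambda>j. Z $$ (j, i)))"
    unfolding trace_linear[OF X Y] quad_form_linear[OF X Y] add_divide_distrib
      times_divide_eq_right[symmetric]
    by (simp add: algebra_simps sum.distrib sum_distrib_left add_divide_distrib sum_subtractf)
qed

lemma mset_scaled_zero_one:
  fixes y :: "nat \<Rightarrow> real"
  assumes "\<forall>l<m. y l = 0 \<or> y l = 1"
  shows "\<exists>p q. mset (map (\<lambda>l. a * y l) [0..<m]) = replicate_mset p a + replicate_mset q 0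
     \<and> (\<Sum>l<m. y l) = real p \<and> m = p + q"
  using assms
proof (induction m)
  case 0 then show ?case by simp
next
  case (Suc m)
  then obtain p q where pq: "mset (map (\<lambda>l. a * y l) [0..<m]) = replicate_mset p a + replicate_mset q 0"
    "(\<Sum>l<m. y l) = real p" "m = p + q" by auto
  have "y m = 0 \<or> y m = 1" using Suc.prems by simp
  then show ?case
  proof
    assume "y m = 0"
    then show ?thesis using pq by (intro exI[of _ p] exI[of _ "Suc q"]) simp
  next
    assume "y m = 1"
    then show ?thesis using pq by (intro exI[of _ "Suc p"] exI[of _ q]) (simp add: add.commute)
  qed
qed

definition splice_spectrum :: "nat \<Rightarrow> (nat \<Rightarrow> real) \<Rightarrow> real \<Rightarrow> (nat \<Rightarrow> real) \<Rightarrow> nat \<Rightarrow> real" where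
  "splice_spectrum k \<beta> a y l = (if l < k then \<beta> l else a * y (l - k))"

lemma Phi_splice_spectrum_vertex:
  assumes V: "orthonormal n V" and ks: "k \<le> s" and sn: "s \<le> n" and a: "a > 0"
    and \<beta>: "\<And>i. i < k \<Longrightarrow> a < \<beta> i" and \<beta>dec: "\<And>i j. i \<le> j \<Longrightarrow> j < k \<Longrightarrow> \<beta> j \<le> \<beta> i"
    and y: "y \<in> hypersimplex (n - k) (s - k)" and y01: "\<forall>i<n - k. y i = 0 \<or> y i = 1"
  shows "Phi s (V * mat_diag n (splice_spectrum k \<beta> a y) * transpose_mat V) 0
    = ereal ((\<Sum>i<k. ln (\<beta> i)) + real (s - k) * ln a)"
proof -
  define L where "L = map \<beta> [0..<k] @ replicate (s - k) a @ replicate (n - s) 0"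
  obtain p q where pq: "mset (map (\<lambda>l. a * y l) [0..<n - k]) = replicate_mset p a + replicate_mset q 0"
    "(\<Sum>l<n - k. y l) = real p" "n - k = p + q"
    using mset_scaled_zero_one[OF y01, of a] by blast
  have p: "p = s - k" and q: "q = n - s" using pq(2,3) y ks sn unfolding hypersimplex_def by auto
  have "map (splice_spectrum k \<beta> a y) [0..<n] = map \<beta> [0..<k] @ map (\<lambda>l. a * y l) [0..<n - k]"
    by (rule nth_equalityI) (use ks sn in \<open>auto simp: nth_append splice_spectrum_def\<close>)
  then have mset_L: "mset L = mset (map (splice_spectrum k \<beta> a y) [0..<n])"
    unfolding L_def using pq(1) p q by simp
  have "sorted (rev L)"
  proof -
    have "sorted (rev (map \<beta> [0..<k]))"
      unfolding sorted_iff_nth_mono using \<beta>dec by (auto simp: rev_nth)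
    moreover have "\<forall>x\<in>set (map \<beta> [0..<k]). a \<le> x" using \<beta> by (auto simp: less_imp_le)
    ultimately show ?thesis using a unfolding L_def by (auto simp: sorted_append)
  qed
  then have eigs: "eigs (V * mat_diag n (splice_spectrum k \<beta> a y) * transpose_mat V) = L"
    by (rule eigs_diag_conj[OF V _ mset_L])
  have L_head: "L ! i = \<beta> i" if "i < k" for i using that unfolding L_def by (simp add: nth_append)
  have L_mid: "L ! i = a" if "k \<le> i" "i < s" for i
  proof -
    have "i - k < s - k" using that by simp
    then show ?thesis using that unfolding L_def by (simp add: nth_append)
  qed
  have "L ! i + 0 > 0" if "i < s" for i
    using L_head L_mid \<beta> a that by (cases "i < k") fastforce+
  then have "Phi s (V * mat_diag n (splice_spectrum k \<beta> a y) * transpose_mat V) 0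
      = ereal ((\<Sum>i<k. ln (L ! i)) + (\<Sum>i\<in>{k..<s}. ln (L ! i)))"
    using Phi_eq_sum_ln[of s _ 0] sum_lessThan_split[OF ks, of "\<lambda>i. ln (L ! i)"] eigs by simp
  also have "\<dots> = ereal ((\<Sum>i<k. ln (\<beta> i)) + real (s - k) * ln a)"
    using L_head L_mid by simp
  finally show ?thesis .
qed

lemma splice_spectrum_tail_ratio:
  assumes ks: "k < s" and sn: "s \<le> n" and a: "a > 0"
    and \<beta>0: "\<And>i. i < n \<Longrightarrow> 0 \<le> \<beta> i" and \<beta>a: "\<And>i. k \<le> i \<Longrightarrow> i < n \<Longrightarrow> \<beta> i \<le> a"
    and tail: "(\<Sum>i\<in>{k..<n}. \<beta> i) = real (s - k) * a"
  defines "y \<equiv> \<lambda>l. if l < n - k then \<beta> (l + k) / a else 0"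
  shows "y \<in> hypersimplex (n - k) (s - k)" and "\<And>l. l < n \<Longrightarrow> splice_spectrum k \<beta> a y l = \<beta> l"
proof -
  have "(\<Sum>i<n - k. \<beta> (i + k)) = (\<Sum>i\<in>{k..<n}. \<beta> i)"
    using sum.shift_bounds_nat_ivl[of \<beta> 0 k "n - k"] ks sn by (simp add: lessThan_atLeast0)
  then have "(\<Sum>i<n - k. y i) = real (s - k)"
    using tail a unfolding y_def by (simp add: sum_divide_distrib[symmetric])
  then show "y \<in> hypersimplex (n - k) (s - k)"
    unfolding hypersimplex_def y_def using \<beta>0 \<beta>a a by auto
  show "splice_spectrum k \<beta> a y l = \<beta> l" if "l < n" for l
    using that a unfolding splice_spectrum_def y_def by auto
qed

lemma concave_majorant_lower_bound:
  assumes V: "orthonormal n V" and ks: "k < s" and sn: "s \<le> n" and a: "a > 0"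
    and \<beta>0: "\<And>i. i < n \<Longrightarrow> 0 \<le> \<beta> i" and \<beta>dec: "\<And>i j. i \<le> j \<Longrightarrow> j < n \<Longrightarrow> \<beta> j \<le> \<beta> i"
    and \<beta>big: "\<And>i. i < k \<Longrightarrow> a < \<beta> i" and \<beta>small: "\<And>i. k \<le> i \<Longrightarrow> i < n \<Longrightarrow> \<beta> i \<le> a"
    and tail: "(\<Sum>i\<in>{k..<n}. \<beta> i) = real (s - k) * a"
    and conc: "concave_on_psd n g" and maj: "\<And>Y. Y \<in> psd_cone n \<Longrightarrow> Phi s Y 0 \<le> ereal (g Y)"
  shows "(\<Sum>i<k. ln (\<beta> i)) + real (s - k) * ln a \<le> g (V * mat_diag n \<beta> * transpose_mat V)"
proof -
  define M where "M y = V * mat_diag n (splice_spectrum k \<beta> a y) * transpose_mat V" for y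
  have M_psd: "M y \<in> psd_cone n" if "y \<in> hypersimplex (n - k) (s - k)" for y
    unfolding M_def
  proof (rule diag_conj_psd[OF orthonormal_carrier[OF V]])
    show "0 \<le> splice_spectrum k \<beta> a y l" if "l < n" for l
      using \<beta>0 \<open>l < n\<close> \<open>y \<in> _\<close> a unfolding splice_spectrum_def hypersimplex_def by auto
  qed
  define y where "y l = (if l < n - k then \<beta> (l + k) / a else 0)" for l
  note y = splice_spectrum_tail_ratio[OF ks sn a \<beta>0 \<beta>small tail, folded y_def]
  have "mat_diag n (splice_spectrum k \<beta> a y) = mat_diag n \<beta>"
    by (rule eq_matI) (auto simp: mat_diag_def y(2))
  then have My: "M y = V * mat_diag n \<beta> * transpose_mat V" unfolding M_def by simp
  have "(\<Sum>i<k. ln (\<beta> i)) + real (s - k) * ln a \<le> g (M y)"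
  proof (rule concave_hypersimplex_bound[of _ _ "\<lambda>y. g (M y)", OF _ _ y(1)])
    fix y z :: "nat \<Rightarrow> real" and \<theta> :: real
    assume "y \<in> hypersimplex (n - k) (s - k)" "z \<in> hypersimplex (n - k) (s - k)" "0 \<le> \<theta>" "\<theta> \<le> 1"
    moreover have "M (\<lambda>i. \<theta> * y i + (1 - \<theta>) * z i) = \<theta> \<cdot>\<^sub>m M y + (1 - \<theta>) \<cdot>\<^sub>m M z"
      unfolding M_def
      by (rule diag_conj_convex_comb[OF orthonormal_carrier[OF V]]) (simp add: splice_spectrum_def algebra_simps)
    ultimately show "\<theta> * g (M y) + (1 - \<theta>) * g (M z) \<le> g (M (\<lambda>i. \<theta> * y i + (1 - \<theta>) * z i))"
      using conc M_psd unfolding concave_on_psd_def by simp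
  next
    fix y assume y: "y \<in> hypersimplex (n - k) (s - k)" and y01: "\<forall>i<n - k. y i = 0 \<or> y i = 1"
    have "Phi s (M y) 0 = ereal ((\<Sum>i<k. ln (\<beta> i)) + real (s - k) * ln a)"
      unfolding M_def using ks sn by (intro Phi_splice_spectrum_vertex[OF V _ sn a \<beta>big \<beta>dec y y01]) auto
    then show "(\<Sum>i<k. ln (\<beta> i)) + real (s - k) * ln a \<le> g (M y)" using maj[OF M_psd[OF y]] by simp
  qed
  then show ?thesis using My by simp
qed

lemma Phi_hat_lower_bound:
  fixes X :: "real mat" and n s k :: nat and a :: real
  assumes X: "X \<in> psd_cone n" and ks: "k < s" and sn: "s \<le> n"
    and a: "a > 0" and tail: "(\<Sum>i\<in>{k..<n}. eigs X ! i) = real (s - k) * a"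
    and head: "k = 0 \<or> eigs X ! (k - 1) > a" and ak: "eigs X ! k \<le> a"
  shows "Phi_hat n s X 0 \<ge> ereal ((\<Sum>i<k. ln (eigs X ! i)) + real (s - k) * ln a)"
proof -
  define \<beta> where "\<beta> i = eigs X ! i" for i
  have Xc: "X \<in> carrier_mat n n" and sym: "transpose_mat X = X" using X unfolding psd_cone_def by auto
  obtain V where V: "orthonormal n V" and dec: "X = V * mat_diag n \<beta> * transpose_mat V"
    using spectral_decomposition[OF Xc sym] unfolding \<beta>_def by blast
  have \<beta>0: "0 \<le> \<beta> i" if "i < n" for i unfolding \<beta>_def by (rule psd_eigs_nonneg[OF X that])
  have \<beta>dec: "\<beta> j \<le> \<beta> i" if "i \<le> j" "j < n" for i j unfolding \<beta>_def by (rule eigs_antimono[OF Xc sym that])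
  have \<beta>big: "a < \<beta> i" if "i < k" for i
  proof -
    have "a < \<beta> (k - 1)" using head that unfolding \<beta>_def by auto
    moreover have "\<beta> (k - 1) \<le> \<beta> i" using \<beta>dec[of i "k - 1"] that ks sn by simp
    ultimately show ?thesis by simp
  qed
  have \<beta>small: "\<beta> i \<le> a" if "k \<le> i" "i < n" for i using \<beta>dec[of k i] that ak unfolding \<beta>_def by simp
  show ?thesis
    unfolding Phi_hat_def
  proof (rule INF_greatest)
    fix g assume "g \<in> {g. concave_on_psd n g \<and> (\<forall>Y\<in>psd_cone n. Phi s Y 0 \<le> ereal (g Y))}"
    then have "(\<Sum>i<k. ln (\<beta> i)) + real (s - k) * ln a \<le> g X"
      using concave_majorant_lower_bound[OF V ks sn a \<beta>0 \<beta>dec \<beta>big \<beta>small tail[folded \<beta>_def], of g]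
      unfolding dec[symmetric] by auto
    then show "ereal ((\<Sum>i<k. ln (eigs X ! i)) + real (s - k) * ln a) \<le> ereal (g X)"
      unfolding \<beta>_def by simp
  qed
qed

lemma ereal_diff_bound:
  fixes u v :: ereal and p d :: real
  assumes "ereal p \<le> u" "v \<le> ereal (p - d)"
  shows "ereal d \<le> u - v"
  using assms by (cases u; cases v) auto

section \<open>The Gram matrices of the two Cholesky factors\<close>

definition col_scaled :: "nat \<Rightarrow> real mat \<Rightarrow> (nat \<Rightarrow> real) \<Rightarrow> real mat" where
  "col_scaled n A x = mat n n (\<lambda>(a,i). A $$ (a,i) * sqrt (x i))"

lemma col_scaled_carrier [simp]: "col_scaled n A x \<in> carrier_mat n n"
  by (simp add: col_scaled_def)

lemma Mx_eq_col_scaled: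
  assumes x: "\<And>i. i < n \<Longrightarrow> 0 \<le> x i"
  shows "Mx n A x = col_scaled n A x * transpose_mat (col_scaled n A x)"
proof (rule eq_matI)
  fix j l assume "j < dim_row (col_scaled n A x * transpose_mat (col_scaled n A x))"
    "l < dim_col (col_scaled n A x * transpose_mat (col_scaled n A x))"
  then have j: "j < n" and l: "l < n" by (auto simp: col_scaled_def)
  have "(col_scaled n A x * transpose_mat (col_scaled n A x)) $$ (j,l)
      = (\<Sum>i<n. col_scaled n A x $$ (j,i) * col_scaled n A x $$ (l,i))"
    using j l by (subst index_mult_mat_sum[OF col_scaled_carrier square_transpose_carrier_mat[OF col_scaled_carrier] j l])
      (auto simp: col_scaled_def intro!: sum.cong)
  also have "\<dots> = (\<Sum>i<n. x i * (A $$ (j,i) * A $$ (l,i)))"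
    using j l x unfolding col_scaled_def
    by (intro sum.cong refl) (auto simp: algebra_simps real_sqrt_mult[symmetric] simp del: real_sqrt_mult)
  finally have "(col_scaled n A x * transpose_mat (col_scaled n A x)) $$ (j,l)
      = (\<Sum>i<n. x i * (A $$ (j,i) * A $$ (l,i)))" .
  then show "Mx n A x $$ (j,l) = (col_scaled n A x * transpose_mat (col_scaled n A x)) $$ (j,l)"
    unfolding Mx_def using j l by simp
qed (auto simp: Mx_def col_scaled_def)

lemma col_scaled_gram_entry:
  assumes A: "A \<in> carrier_mat n n" and i: "i < n" and j: "j < n"
  shows "(transpose_mat (col_scaled n A x) * col_scaled n A x) $$ (i,j)
    = sqrt (x i) * sqrt (x j) * (transpose_mat A * A) $$ (i,j)"
proof -
  have "(transpose_mat (col_scaled n A x) * col_scaled n A x) $$ (i,j)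
      = (\<Sum>a<n. col_scaled n A x $$ (a,i) * col_scaled n A x $$ (a,j))"
    using i j by (subst index_mult_mat_sum[OF square_transpose_carrier_mat[OF col_scaled_carrier] col_scaled_carrier i j])
      (auto simp: col_scaled_def intro!: sum.cong)
  also have "\<dots> = sqrt (x i) * sqrt (x j) * (\<Sum>a<n. A $$ (a,i) * A $$ (a,j))"
    unfolding col_scaled_def using i j by (simp add: sum_distrib_left algebra_simps)
  also have "(\<Sum>a<n. A $$ (a,i) * A $$ (a,j)) = (transpose_mat A * A) $$ (i,j)"
    using i j A by (subst index_mult_mat_sum[OF square_transpose_carrier_mat[OF A] A i j]) simp
  finally show ?thesis .
qed

locale shifted_gram =
  fixes n s :: nat and lam :: real and A0 A1 :: "real mat" and x :: "nat \<Rightarrow> real"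
  assumes A0: "A0 \<in> carrier_mat n n" and A1: "A1 \<in> carrier_mat n n"
    and gram_shift: "transpose_mat A1 * A1 = transpose_mat A0 * A0 - lam \<cdot>\<^sub>m 1\<^sub>m n"
    and lam_pos: "0 < lam" and feasible: "feasible n s x"
begin

lemma x_nonneg: "i < n \<Longrightarrow> 0 \<le> x i"
  and x_le_one: "i < n \<Longrightarrow> x i \<le> 1"
  and sum_x: "(\<Sum>i<n. x i) = real s"
  using feasible unfolding feasible_def by auto

definition W0 :: "real mat" where
  "W0 = transpose_mat (col_scaled n A0 x) * col_scaled n A0 x"

definition W1 :: "real mat" where
  "W1 = transpose_mat (col_scaled n A1 x) * col_scaled n A1 x"

lemma W0_psd: "W0 \<in> psd_cone n" and W1_psd: "W1 \<in> psd_cone n"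
  unfolding W0_def W1_def by (simp_all add: gram_psd)

lemma W0_carrier: "W0 \<in> carrier_mat n n" and W0_symmetric: "transpose_mat W0 = W0"
  using W0_psd unfolding psd_cone_def by auto

lemma Mx_psd: "Mx n A x \<in> psd_cone n"
  using gram_psd[of "transpose_mat (col_scaled n A x)" n] by (simp add: Mx_eq_col_scaled x_nonneg)

lemma eigs_Mx_A0: "eigs (Mx n A0 x) = eigs W0"
  and eigs_Mx_A1: "eigs (Mx n A1 x) = eigs W1"
  using Mx_eq_col_scaled[of n x] x_nonneg
  unfolding W0_def W1_def by (simp_all add: eigs_mult_commute[OF col_scaled_carrier])

lemma W1_entry:
  assumes "i < n" "j < n"
  shows "W1 $$ (i,j) = W0 $$ (i,j) - lam * (if i = j then x i else 0)"
  using col_scaled_gram_entry[OF A0 assms, of x] col_scaled_gram_entry[OF A1 assms, of x]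
    x_nonneg[OF assms(1)] assms A0
  unfolding W0_def W1_def gram_shift by (auto simp: algebra_simps)

lemma quad_form_W1: "quad_form n W1 z = quad_form n W0 z - lam * (\<Sum>j<n. x j * (z j)^2)"
proof -
  have "quad_form n W1 z = (\<Sum>a<n. \<Sum>b<n. z a * W0 $$ (a,b) * z b
      - lam * (if a = b then x a * (z a)^2 else 0))"
    unfolding quad_form_def by (intro sum.cong refl) (auto simp: W1_entry algebra_simps power2_eq_square)
  also have "\<dots> = quad_form n W0 z - lam * (\<Sum>j<n. x j * (z j)^2)"
    unfolding quad_form_def by (simp add: sum_subtractf sum_distrib_left[symmetric] sum.delta')
  finally show ?thesis .
qed

lemma trace_W1: "mat_trace n W1 = mat_trace n W0 - lam * real s"
  unfolding mat_trace_def using sum_x by (simp add: W1_entry sum_subtractf sum_distrib_left[symmetric])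

definition beta :: "nat \<Rightarrow> real" where
  "beta i = eigs W0 ! i"

definition V :: "real mat" where
  "V = (SOME V. orthonormal n V \<and> W0 = V * mat_diag n beta * transpose_mat V)"

lemma V: "orthonormal n V" and W0_eq: "W0 = V * mat_diag n beta * transpose_mat V"
proof -
  have "\<exists>V. orthonormal n V \<and> W0 = V * mat_diag n beta * transpose_mat V"
    using spectral_decomposition[OF W0_carrier W0_symmetric] unfolding beta_def by blast
  then have "orthonormal n V \<and> W0 = V * mat_diag n beta * transpose_mat V"
    unfolding V_def by (rule someI_ex)
  then show "orthonormal n V" "W0 = V * mat_diag n beta * transpose_mat V" by auto
qed

lemma beta_antimono: "i \<le> j \<Longrightarrow> j < n \<Longrightarrow> beta j \<le> beta i"
  unfolding beta_def by (rule eigs_antimono[OF W0_carrier W0_symmetric])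

lemma eig_Mx_A0: "eig (Mx n A0 x) j = beta (j - 1)"
  unfolding eig_def eigs_Mx_A0 beta_def ..

lemma sum_eig_Mx_A0: "(\<Sum>i = k + 1..n. eig (Mx n A0 x) i) = (\<Sum>i\<in>{k..<n}. beta i)"
proof -
  have "(\<Sum>i = k + 1..n. eig (Mx n A0 x) i) = (\<Sum>i\<in>{Suc k..<Suc n}. beta (i - 1))"
    unfolding eig_Mx_A0 by (intro sum.cong) auto
  also have "\<dots> = (\<Sum>i\<in>{k..<n}. beta i)"
    using sum.shift_bounds_Suc_ivl[of "\<lambda>i. beta (i - 1)" k n] by simp
  finally show ?thesis .
qed

definition d :: "nat \<Rightarrow> real" where
  "d i = (\<Sum>j<n. x j * (V $$ (j,i))^2)"

lemma d_le_one:
  assumes "i < n" shows "d i \<le> 1"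
proof -
  have "d i \<le> (\<Sum>j<n. (V $$ (j,i))^2)"
    unfolding d_def by (rule sum_mono) (auto intro!: mult_left_le_one_le simp: x_nonneg x_le_one)
  also have "\<dots> = 1" using orthonormal_columns[OF V assms assms] by (simp add: power2_eq_square)
  finally show ?thesis .
qed

lemma sum_d: "(\<Sum>i<n. d i) = real s"
proof -
  have "(\<Sum>i<n. d i) = (\<Sum>j<n. \<Sum>i<n. x j * (V $$ (j,i) * V $$ (j,i)))"
    unfolding d_def power2_eq_square by (rule sum.swap)
  also have "\<dots> = (\<Sum>j<n. x j * (\<Sum>i<n. V $$ (j,i) * V $$ (j,i)))"
    by (simp add: sum_distrib_left)
  also have "\<dots> = (\<Sum>j<n. x j)" by (intro sum.cong refl) (simp add: orthonormal_rows[OF V])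
  finally show ?thesis using sum_x by simp
qed

lemma quad_form_W1_V: "i < n \<Longrightarrow> quad_form n W1 (\<lambda>j. V $$ (j,i)) = beta i - lam * d i"
  unfolding quad_form_W1 d_def using quad_form_diag_conj_column[OF V, of i beta] W0_eq by simp

lemma lam_d_le_beta: "i < n \<Longrightarrow> lam * d i \<le> beta i"
  using psd_quad_form_nonneg[OF W1_psd, of "\<lambda>j. V $$ (j,i)"] quad_form_W1_V by simp

lemma tail_beta_lower:
  assumes "k \<le> n" shows "lam * (real s - real k) \<le> (\<Sum>i\<in>{k..<n}. beta i)"
proof -
  have "(\<Sum>i<k. d i) \<le> (\<Sum>i<k. 1)" by (rule sum_mono) (use d_le_one assms in simp)
  then have "real s - real k \<le> (\<Sum>i\<in>{k..<n}. d i)"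
    using sum_d sum_lessThan_split[OF assms, of d] by simp
  then have "lam * (real s - real k) \<le> lam * (\<Sum>i\<in>{k..<n}. d i)"
    using lam_pos by (intro mult_left_mono) auto
  also have "\<dots> = (\<Sum>i\<in>{k..<n}. lam * d i)" by (simp add: sum_distrib_left)
  also have "\<dots> \<le> (\<Sum>i\<in>{k..<n}. beta i)" by (rule sum_mono) (simp add: lam_d_le_beta)
  finally show ?thesis .
qed

end

text \<open>The index \<open>k\<close> of the statement, in the \<open>0\<close>-based numbering of \<open>beta\<close>: \<open>a\<close> is the mean of the
  tail \<open>\<beta>\<^sub>k, \<dots>, \<beta>\<^sub>n\<^sub>-\<^sub>1\<close> over \<open>s - k\<close> slots.\<close>

locale shifted_gram_index = shifted_gram +
  fixes k :: nat
  assumes k_less: "k < s" and s_le: "s \<le> n"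
    and head: "k = 0 \<or> (\<Sum>i\<in>{k..<n}. beta i) / real (s - k) < beta (k - 1)"
    and tail: "beta k \<le> (\<Sum>i\<in>{k..<n}. beta i) / real (s - k)"
begin

definition a :: real where
  "a = (\<Sum>i\<in>{k..<n}. beta i) / real (s - k)"

definition gamma :: real where
  "gamma = (\<Sum>i<k. ln (beta i)) + real (s - k) * ln a"

definition c :: "nat \<Rightarrow> real" where
  "c i = 1 / a - 1 / beta i"

definition gap_bound :: real where
  "gap_bound = lam * (real k - (\<Sum>i = 1..k. xdown n x i))
     * (real (s - k) / (\<Sum>i\<in>{k..<n}. beta i) - (if k = 0 then 0 else 1 / beta (k - 1)))"

lemma k_le_n: "k \<le> n"
  using k_less s_le by simp

lemma tail_sum: "(\<Sum>i\<in>{k..<n}. beta i) = real (s - k) * a"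
  unfolding a_def using k_less by simp

lemma a_pos: "0 < a"
proof -
  have "lam * real (s - k) \<le> real (s - k) * a"
    using tail_beta_lower[OF k_le_n] k_less unfolding tail_sum by (simp add: of_nat_diff)
  then show ?thesis using lam_pos k_less by (simp add: mult.commute)
qed

lemma beta_gt_a: "i < k \<Longrightarrow> a < beta i"
  using head beta_antimono[of i "k - 1"] k_le_n unfolding a_def by fastforce

lemma c_pos: "i < k \<Longrightarrow> 0 < c i"
  unfolding c_def using beta_gt_a a_pos by (simp add: frac_less2)

lemma c_antimono: "i \<le> j \<Longrightarrow> j < k \<Longrightarrow> c j \<le> c i"
  unfolding c_def using beta_antimono[of i j] beta_gt_a[of i] beta_gt_a[of j] a_pos k_le_n
  by (simp add: frac_le)

lemma zhat_A0_lower: "ereal gamma \<le> zhat n s A0 0"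
proof -
  have "ereal ((\<Sum>i<k. ln (eigs (Mx n A0 x) ! i)) + real (s - k) * ln a) \<le> Phi_hat n s (Mx n A0 x) 0"
  proof (rule Phi_hat_lower_bound[OF Mx_psd k_less s_le a_pos])
    show "(\<Sum>i\<in>{k..<n}. eigs (Mx n A0 x) ! i) = real (s - k) * a"
      using tail_sum unfolding eigs_Mx_A0 beta_def .
    show "k = 0 \<or> a < eigs (Mx n A0 x) ! (k - 1)"
      using head unfolding eigs_Mx_A0 beta_def a_def .
    show "eigs (Mx n A0 x) ! k \<le> a"
      using tail unfolding eigs_Mx_A0 beta_def a_def .
  qed
  then have "ereal gamma \<le> Phi_hat n s (Mx n A0 x) 0"
    unfolding gamma_def eigs_Mx_A0 beta_def .
  also have "\<dots> \<le> zhat n s A0 0"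
    unfolding zhat_def by (rule SUP_upper) (use feasible in simp)
  finally show ?thesis .
qed

lemma trace_W1_value: "mat_trace n W1 = (\<Sum>i<k. beta i) + real (s - k) * a - lam * real s"
  unfolding trace_W1 W0_eq trace_diag_conj[OF V] sum_lessThan_split[OF k_le_n] tail_sum ..

lemma sum_c_quad_form_W1:
  "(\<Sum>i<k. c i * quad_form n W1 (\<lambda>j. V $$ (j,i))) = (\<Sum>i<k. beta i) / a - real k - lam * (\<Sum>i<k. c i * d i)"
proof -
  have "c i * quad_form n W1 (\<lambda>j. V $$ (j,i)) = (beta i / a - 1) - lam * (c i * d i)" if "i < k" for i
  proof -
    have q: "quad_form n W1 (\<lambda>j. V $$ (j,i)) = beta i - lam * d i"
      using quad_form_W1_V that k_le_n by simp
    have "c i * beta i = beta i / a - 1"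
      unfolding c_def using beta_gt_a[OF that] a_pos by (simp add: field_simps)
    moreover have "c i * quad_form n W1 (\<lambda>j. V $$ (j,i)) = c i * beta i - lam * (c i * d i)"
      unfolding q by (simp add: algebra_simps)
    ultimately show ?thesis by simp
  qed
  then show ?thesis by (simp add: sum_subtractf sum_divide_distrib sum_distrib_left)
qed

definition affine_majorant :: "real mat \<Rightarrow> real mat \<Rightarrow> real" where
  "affine_majorant Z Y = (\<Sum>i<k. ln (beta i)) + real (s - k) * ln a - real s
      + lam * ((\<Sum>i<k. 1 / beta i) + real (s - k) / a)
      + mat_trace n Y / a - (\<Sum>i<k. c i * quad_form n Y (\<lambda>j. Z $$ (j,i)))"

lemma Phi_hat_le_affine_majorant:
  assumes Z: "orthonormal n Z" and Y: "Y \<in> psd_cone n"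
  shows "Phi_hat n s Y lam \<le> ereal (affine_majorant Z Y)"
  unfolding Phi_hat_def
proof (rule INF_lower, safe)
  show "concave_on_psd n (affine_majorant Z)"
    unfolding affine_majorant_def[abs_def] by (rule concave_on_psd_affine)
  show "Phi s Y' lam \<le> ereal (affine_majorant Z Y')" if "Y' \<in> psd_cone n" for Y'
    unfolding affine_majorant_def c_def
    by (rule Phi_affine_majorant[OF Z _ s_le lam_pos a_pos _ _ that])
      (use k_less k_le_n beta_gt_a beta_antimono in \<open>auto simp: less_imp_le\<close>)
qed

lemma sum_c_one_minus_d:
  "(\<Sum>i<k. c i * (1 - d i)) = real k / a - (\<Sum>i<k. 1 / beta i) - (\<Sum>i<k. c i * d i)"
proof -
  have "(\<Sum>i<k. c i * (1 - d i)) = (\<Sum>i<k. c i) - (\<Sum>i<k. c i * d i)"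
    by (simp add: right_diff_distrib sum_subtractf)
  moreover have "(\<Sum>i<k. c i) = real k / a - (\<Sum>i<k. 1 / beta i)"
    unfolding c_def by (simp add: sum_subtractf)
  ultimately show ?thesis by simp
qed

lemma affine_majorant_value:
  assumes qf: "\<And>i. i < n \<Longrightarrow> quad_form n X (\<lambda>j. Z $$ (j,i)) = quad_form n W1 (\<lambda>j. V $$ (j,i))"
    and tr: "mat_trace n X = mat_trace n W1"
  shows "affine_majorant Z X = gamma - lam * (\<Sum>i<k. c i * (1 - d i))"
proof -
  have tr_a: "mat_trace n X / a = (\<Sum>i<k. beta i) / a + real (s - k) - lam * real s / a"
    unfolding tr trace_W1_value using a_pos by (simp add: add_divide_distrib diff_divide_distrib)
  have qf_sum: "(\<Sum>i<k. c i * quad_form n X (\<lambda>j. Z $$ (j,i)))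
      = (\<Sum>i<k. beta i) / a - real k - lam * (\<Sum>i<k. c i * d i)"
    using qf k_le_n sum_c_quad_form_W1 by simp
  show ?thesis
    unfolding affine_majorant_def gamma_def tr_a qf_sum sum_c_one_minus_d using k_less
    by (simp add: algebra_simps diff_divide_distrib of_nat_diff)
qed

lemma zhat_A1_upper:
  assumes opt: "optimal n s A1 lam x"
  shows "zhat n s A1 lam \<le> ereal (gamma - lam * (\<Sum>i<k. c i * (1 - d i)))"
proof -
  have X1: "Mx n A1 x \<in> carrier_mat n n" "transpose_mat (Mx n A1 x) = Mx n A1 x"
    and W1: "W1 \<in> carrier_mat n n" "transpose_mat W1 = W1"
    using Mx_psd W1_psd unfolding psd_cone_def by auto
  obtain Z where Z: "orthonormal n Z"
    and qf: "\<And>i. i < n \<Longrightarrow> quad_form n (Mx n A1 x) (\<lambda>j. Z $$ (j,i)) = quad_form n W1 (\<lambda>j. V $$ (j,i))"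
    and tr: "mat_trace n (Mx n A1 x) = mat_trace n W1"
    using quad_form_orthonormal_transfer[OF X1 W1 eigs_Mx_A1 V] by blast
  have "zhat n s A1 lam \<le> Phi_hat n s (Mx n A1 x) lam"
    unfolding zhat_def by (rule SUP_least) (use opt in \<open>auto simp: optimal_def\<close>)
  also have "\<dots> \<le> ereal (affine_majorant Z (Mx n A1 x))"
    by (rule Phi_hat_le_affine_majorant[OF Z Mx_psd])
  also have "affine_majorant Z (Mx n A1 x) = gamma - lam * (\<Sum>i<k. c i * (1 - d i))"
    by (rule affine_majorant_value[OF qf tr])
  finally show ?thesis .
qed

lemma gap_bound_eq:
  "gap_bound = lam * (real k - (\<Sum>i = 1..k. xdown n x i)) * (if k = 0 then 1 / a else c (k - 1))"
  unfolding gap_bound_def tail_sum c_def using k_less a_pos by simp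

lemma sum_xdown_le: "(\<Sum>i = 1..k. xdown n x i) \<le> real k"
proof -
  have "(\<Sum>i = 1..k. xdown n x i) \<le> (\<Sum>i = 1..k. 1)"
    by (rule sum_mono) (use xdown_le_one x_le_one k_le_n in auto)
  then show ?thesis by simp
qed

lemma gap_bound_nonneg: "0 \<le> gap_bound"
proof -
  have "0 \<le> (if k = 0 then 1 / a else c (k - 1))" using a_pos c_pos[of "k - 1"] by auto
  then show ?thesis unfolding gap_bound_eq using lam_pos sum_xdown_le by simp
qed

lemma gap_bound_le: "gap_bound \<le> lam * (\<Sum>i<k. c i * (1 - d i))"
proof (cases "k = 0")
  case True
  then show ?thesis unfolding gap_bound_eq by simp
next
  case False
  have "c (k - 1) * (real k - (\<Sum>i = 1..k. xdown n x i)) \<le> c (k - 1) * (\<Sum>i<k. 1 - d i)"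
    using xdown_bound[OF V k_le_n, of x] c_pos[of "k - 1"] False
    by (intro mult_left_mono) (auto simp: sum_subtractf d_def)
  also have "\<dots> \<le> (\<Sum>i<k. c i * (1 - d i))"
    unfolding sum_distrib_left
    by (rule sum_mono, rule mult_right_mono) (use c_antimono d_le_one k_le_n in auto)
  finally show ?thesis
    unfolding gap_bound_eq using False lam_pos by (simp add: mult.commute mult.left_commute)
qed

lemma zhat_A1_upper_gap_bound:
  assumes "optimal n s A1 lam x"
  shows "zhat n s A1 lam \<le> ereal (gamma - gap_bound)"
  using zhat_A1_upper[OF assms] gap_bound_le by (simp add: order_trans)

theorem relaxation_gap:
  assumes "optimal n s A1 lam x"
  shows "ereal gap_bound \<le> zhat n s A0 0 - zhat n s A1 lam"
  by (rule ereal_diff_bound[OF zhat_A0_lower zhat_A1_upper_gap_bound[OF assms]])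

theorem relaxation_gap_strict:
  assumes "optimal n s A1 lam x" and "1 \<le> k" and "xdown n x k < 1"
  shows "zhat n s A1 lam < zhat n s A0 0"
proof -
  have "(\<Sum>i = 1..k. xdown n x i) = (\<Sum>i = 1..k - 1. xdown n x i) + xdown n x k"
    using assms(2) by (cases k) auto
  also have "(\<Sum>i = 1..k - 1. xdown n x i) \<le> (\<Sum>i = 1..k - 1. 1)"
    by (rule sum_mono) (use xdown_le_one x_le_one k_le_n in auto)
  finally have "(\<Sum>i = 1..k. xdown n x i) < real k" using assms(2,3) by simp
  then have "0 < gap_bound"
    unfolding gap_bound_eq using lam_pos c_pos[of "k - 1"] assms(2) by simp
  then have "ereal (gamma - gap_bound) < ereal gamma" by simp
  then show ?thesis
    using zhat_A1_upper_gap_bound[OF assms(1)] zhat_A0_lower by (meson le_less_trans less_le_trans)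
qed

end

theorem theorem3:
  fixes n s k :: nat and C A0 A1 :: "real mat" and xs :: "nat \<Rightarrow> real"
  assumes "n \<ge> 1" and "1 \<le> s" and "s \<le> n"
    and "sym_pd n C"
    and "cholesky_factor n C A0"
    and "cholesky_factor n (C - lambda_min C \<cdot>\<^sub>m 1\<^sub>m n) A1"
    and "optimal n s A1 (lambda_min C) xs"
    and "k < s"
    and "k = 0 \<or> eig (Mx n A0 xs) k > (\<Sum>i=k+1..n. eig (Mx n A0 xs) i) / real (s - k)"
    and "(\<Sum>i=k+1..n. eig (Mx n A0 xs) i) / real (s - k) \<ge> eig (Mx n A0 xs) (k + 1)"
  shows "zhat n s A0 0 - zhat n s A1 (lambda_min C) \<ge>
           ereal (lambda_min C * (real k - (\<Sum>i=1..k. xdown n xs i)) *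
              (real (s - k) / (\<Sum>i=k+1..n. eig (Mx n A0 xs) i)
               - (if k = 0 then 0 else 1 / eig (Mx n A0 xs) k)))
       \<and> lambda_min C * (real k - (\<Sum>i=1..k. xdown n xs i)) *
              (real (s - k) / (\<Sum>i=k+1..n. eig (Mx n A0 xs) i)
               - (if k = 0 then 0 else 1 / eig (Mx n A0 xs) k)) \<ge> 0
       \<and> (k \<ge> 1 \<and> xdown n xs k < 1 \<longrightarrow> zhat n s A0 0 > zhat n s A1 (lambda_min C))"
proof -
  let ?lam = "lambda_min C"
  have C: "C \<in> carrier_mat n n" using assms(4) by (simp add: sym_pd_def)
  interpret shifted_gram n s ?lam A0 A1 xs
    by unfold_locales
      (use assms C sym_pd_lambda_min_pos[OF assms(4,1)] in \<open>auto simp: cholesky_factor_def optimal_def\<close>)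
  have "k = 0 \<or> (\<Sum>i\<in>{k..<n}. beta i) / real (s - k) < beta (k - 1)"
    and "beta k \<le> (\<Sum>i\<in>{k..<n}. beta i) / real (s - k)"
    using assms(9,10) unfolding sum_eig_Mx_A0 by (simp_all add: eig_Mx_A0)
  then interpret shifted_gram_index n s ?lam A0 A1 xs k
    using assms(3,8) by unfold_locales
  have "gap_bound = lambda_min C * (real k - (\<Sum>i=1..k. xdown n xs i)) *
      (real (s - k) / (\<Sum>i=k+1..n. eig (Mx n A0 xs) i) - (if k = 0 then 0 else 1 / eig (Mx n A0 xs) k))"
    unfolding gap_bound_def sum_eig_Mx_A0 by (simp add: eig_Mx_A0)
  then show ?thesis
    using relaxation_gap[OF assms(7)] gap_bound_nonneg relaxation_gap_strict[OF assms(7)] by simp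
qed

end
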